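(* Let $\mathbf{X}\in\mathbb{R}^{n\times p}$ have columns of unit $\ell_2$ norm, let $\boldsymbol{\beta}\in\mathbb{R}^p$ have support $\mathcal{I}$ with $|\mathcal{I}|=k_0\ge1$, and suppose $(\mathbf{X},\boldsymbol{\beta})$ satisfies the exact recovery condition: $\mathbf{X}_{\mathcal{I}}$ has full column rank and $\max_{j\notin\mathcal{I}}\|\mathbf{X}_{\mathcal{I}}^{\dagger}\mathbf{X}_j\|_1<1$. Let $\mathbf{y}=\mathbf{X}\boldsymbol{\beta}+\mathbf{w}$ with $\mathbf{w}\sim\mathcal{N}(\mathbf{0}_n,\sigma^2\mathbf{I}_n)$, and let $\hat{\mathcal{I}}$ be the support estimate of TF-OMP with $k_{max}>k_0$. Then TF-OMP is high SNR consistent: $\lim_{\sigma^2\to0}\mathbb{P}(\hat{\mathcal{I}}\neq\mathcal{I})=0$.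
   Context: Notation: $\mathbf{X}_{\mathcal{J}}$ is the submatrix of columns indexed by $\mathcal{J}$; $\mathbf{A}^{\dagger}=(\mathbf{A}^T\mathbf{A})^{-1}\mathbf{A}^T$ for full column rank $\mathbf{A}$; $\mathbf{P}_{\mathcal{J}}=\mathbf{X}_{\mathcal{J}}\mathbf{X}_{\mathcal{J}}^{\dagger}$. Orthogonal matching pursuit (OMP): set $\mathbf{r}^{(0)}=\mathbf{y}$, $\mathcal{J}^0=\emptyset$; at iteration $k\ge1$ select $t_k=\arg\max_{t\in\{1,\dots,p\}}|\mathbf{X}_t^T\mathbf{r}^{(k-1)}|$, set $\mathcal{J}^k=\mathcal{J}^{k-1}\cup\{t_k\}$ and $\mathbf{r}^{(k)}=(\mathbf{I}_n-\mathbf{P}_{\mathcal{J}^k})\mathbf{y}$. TF-OMP (tuning free OMP): run OMP for $k_{max}$ iterations (it is assumed that along these iterations the matrices $\mathbf{X}_{\mathcal{J}^k}$ have full column rank and the residuals $\mathbf{r}^{(k)}$ are nonzero); compute $t(k)=\|\mathbf{r}^{(k)}\|_2^2/\|\mathbf{r}^{(k-1)}\|_2^2$; let $k^*=\arg\min_{1\le k\le k_{max}-1}t(k)$; output the support estimate $\hat{\mathcal{I}}=\{t_1,\dots,t_{k^*}\}$. *)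

theory Defs
  imports "Jordan_Normal_Form.Gauss_Jordan_Elimination" "HOL-Probability.Probability"
begin

text \<open>Matrices are JNF matrices: X is n x p, columns indexed 0..p-1.\<close>

definition col_sub :: "real mat \<Rightarrow> nat list \<Rightarrow> real mat" where
  "col_sub X js = mat_of_cols (dim_row X) (map (col X) js)"

definition full_col_rank :: "real mat \<Rightarrow> bool" where
  "full_col_rank A \<longleftrightarrow>
     (\<forall>v. v \<in> carrier_vec (dim_col A) \<longrightarrow> A *\<^sub>v v = 0\<^sub>v (dim_row A) \<longrightarrow> v = 0\<^sub>v (dim_col A))"

text \<open>Pseudo-inverse (A^T A)^{-1} A^T (meaningful for full column rank A).\<close>
definition pinv :: "real mat \<Rightarrow> real mat" where
  "pinv A = the (mat_inverse (A\<^sup>T * A)) * A\<^sup>T"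

definition proj :: "real mat \<Rightarrow> nat list \<Rightarrow> real mat" where
  "proj X js = col_sub X js * pinv (col_sub X js)"

definition l1_norm :: "real Matrix.vec \<Rightarrow> real" where
  "l1_norm v = (\<Sum>i<dim_vec v. \<bar>v $ i\<bar>)"

definition sq_norm :: "real Matrix.vec \<Rightarrow> real" where
  "sq_norm v = v \<bullet> v"

definition omp_resid :: "real mat \<Rightarrow> real Matrix.vec \<Rightarrow> nat list \<Rightarrow> real Matrix.vec" where
  "omp_resid X y js = (if js = [] then y else y - proj X js *\<^sub>v y)"

definition omp_select :: "real mat \<Rightarrow> real Matrix.vec \<Rightarrow> nat" where
  "omp_select X r = (LEAST t. t < dim_col X \<and>
      (\<forall>s<dim_col X. \<bar>col X s \<bullet> r\<bar> \<le> \<bar>col X t \<bullet> r\<bar>))"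

fun omp_indices :: "real mat \<Rightarrow> real Matrix.vec \<Rightarrow> nat \<Rightarrow> nat list" where
  "omp_indices X y 0 = []"
| "omp_indices X y (Suc k) =
     (let js = omp_indices X y k in js @ [omp_select X (omp_resid X y js)])"

definition omp_res :: "real mat \<Rightarrow> real Matrix.vec \<Rightarrow> nat \<Rightarrow> real Matrix.vec" where
  "omp_res X y k = omp_resid X y (omp_indices X y k)"

definition omp_valid :: "real mat \<Rightarrow> real Matrix.vec \<Rightarrow> nat \<Rightarrow> bool" where
  "omp_valid X y kmax \<longleftrightarrow>
     (\<forall>k\<le>kmax. omp_res X y k \<noteq> 0\<^sub>v (dim_row X)) \<and>
     (\<forall>k\<in>{1..kmax}. full_col_rank (col_sub X (omp_indices X y k)))"

definition tf_ratio :: "real mat \<Rightarrow> real Matrix.vec \<Rightarrow> nat \<Rightarrow> real" where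
  "tf_ratio X y k = sq_norm (omp_res X y k) / sq_norm (omp_res X y (k - 1))"

definition tf_kstar :: "real mat \<Rightarrow> real Matrix.vec \<Rightarrow> nat \<Rightarrow> nat \<Rightarrow> bool" where
  "tf_kstar X y kmax k \<longleftrightarrow> k \<in> {1..kmax - 1} \<and>
     (\<forall>k'\<in>{1..kmax - 1}. tf_ratio X y k \<le> tf_ratio X y k')"

definition tf_omp_est :: "real mat \<Rightarrow> real Matrix.vec \<Rightarrow> nat \<Rightarrow> nat \<Rightarrow> nat set" where
  "tf_omp_est X y kmax k = set (take k (omp_indices X y kmax))"

definition tf_omp_fails :: "real mat \<Rightarrow> real Matrix.vec \<Rightarrow> nat \<Rightarrow> nat set \<Rightarrow> bool" where
  "tf_omp_fails X y kmax I \<longleftrightarrow> (\<exists>k. tf_kstar X y kmax k \<and> tf_omp_est X y kmax k \<noteq> I)"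

text \<open>Distribution of w ~ N(0, s I_n), s = sigma^2 > 0, as a product of i.i.d. Gaussians.\<close>
definition gauss_noise :: "nat \<Rightarrow> real \<Rightarrow> (nat \<Rightarrow> real) measure" where
  "gauss_noise n s = PiM {..<n} (\<lambda>_. density lborel (normal_density 0 (sqrt s)))"

end

theory Submission
  imports Defs "Jordan_Normal_Form.Determinant"
begin

text \<open>For noise \<open>e\<close> of small norm the ERC makes OMP pick only indices of \<open>I\<close> in its first \<open>k\<^sub>0\<close> steps,
  so \<open>I\<close> is recovered at step \<open>k\<^sub>0\<close>. Then \<open>t(k\<^sub>0) = O(\<parallel>e\<parallel>\<^sup>2)\<close>, while for \<open>k < k\<^sub>0\<close> the residuals stay
  bounded away from \<open>0\<close> and \<open>t(k)\<close> is bounded below. After step \<open>k\<^sub>0\<close> all residuals are linear in \<open>e\<close>,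
  so the ratios \<open>t(k)\<close>, \<open>k > k\<^sub>0\<close>, are invariant under rescaling the noise. Writing \<open>w = \<sigma> z\<close> with \<open>z\<close>
  standard Gaussian, a failure therefore requires \<open>z\<close> to be large or one of finitely many a.s.
  positive random variables, independent of \<open>\<sigma>\<close>, to be \<open>O(\<sigma>)\<close>; both events have vanishing
  probability as \<open>\<sigma> \<rightarrow> 0\<close>.\<close>

no_notation Finite_Cartesian_Product.vec_nth (infixl "$" 90)
no_notation Inner_Product.inner (infix "\<bullet>" 70)

section \<open>Column spans and orthogonal projection\<close>

lemma sq_norm_nonneg: "sq_norm v \<ge> 0"
  unfolding sq_norm_def scalar_prod_def by (auto intro: sum_nonneg)

lemma sq_norm_eq_0_iff:
  assumes "v \<in> carrier_vec n" shows "sq_norm v = 0 \<longleftrightarrow> v = 0\<^sub>v n"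
proof
  assume "sq_norm v = 0"
  hence "(\<Sum>i\<in>{0..<n}. v $ i * v $ i) = 0" using assms unfolding sq_norm_def scalar_prod_def by auto
  hence "\<forall>i\<in>{0..<n}. v $ i * v $ i = 0" by (subst (asm) sum_nonneg_eq_0_iff) auto
  thus "v = 0\<^sub>v n" using assms by (intro eq_vecI) auto
qed (simp add: sq_norm_def)

lemma sq_norm_pos: "v \<in> carrier_vec n \<Longrightarrow> v \<noteq> 0\<^sub>v n \<Longrightarrow> sq_norm v > 0"
  using sq_norm_nonneg[of v] sq_norm_eq_0_iff[of v n] by linarith

lemma abs_scalar_prod_le:
  assumes "u \<in> carrier_vec n" "v \<in> carrier_vec n"
  shows "\<bar>u \<bullet> v\<bar> \<le> sqrt (sq_norm u) * sqrt (sq_norm v)"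
proof -
  have "(u \<bullet> v)\<^sup>2 \<le> sq_norm u * sq_norm v"
    using assms Cauchy_Schwarz_ineq_sum[of "\<lambda>i. u $ i" "\<lambda>i. v $ i" "{0..<n}"]
    unfolding sq_norm_def scalar_prod_def by (simp add: power2_eq_square)
  hence "sqrt ((u \<bullet> v)\<^sup>2) \<le> sqrt (sq_norm u * sq_norm v)" by (rule real_sqrt_le_mono)
  thus ?thesis by (simp add: real_sqrt_mult)
qed

lemma sq_norm_add:
  assumes "u \<in> carrier_vec n" "v \<in> carrier_vec n"
  shows "sq_norm (u + v) = sq_norm u + 2 * (u \<bullet> v) + sq_norm v"
  using assms comm_scalar_prod[OF assms(2,1)] unfolding sq_norm_def
  by (simp add: add_scalar_prod_distrib[of _ n] scalar_prod_add_distrib[of _ n])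

lemma sqrt_sq_norm_add_le:
  assumes "u \<in> carrier_vec n" "v \<in> carrier_vec n"
  shows "sqrt (sq_norm (u + v)) \<le> sqrt (sq_norm u) + sqrt (sq_norm v)"
proof -
  have "u \<bullet> v \<le> sqrt (sq_norm u) * sqrt (sq_norm v)" using abs_scalar_prod_le[OF assms] by linarith
  hence "sq_norm (u + v) \<le> (sqrt (sq_norm u) + sqrt (sq_norm v))\<^sup>2"
    unfolding sq_norm_add[OF assms] power2_sum using sq_norm_nonneg[of u] sq_norm_nonneg[of v] by simp
  thus ?thesis using sq_norm_nonneg[of u] sq_norm_nonneg[of v] real_le_lsqrt by auto
qed

lemma sq_norm_smult: "sq_norm (c \<cdot>\<^sub>v v) = c\<^sup>2 * sq_norm v"
  unfolding sq_norm_def by (simp add: power2_eq_square)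

lemma sqrt_sq_norm_add_ge:
  assumes "u \<in> carrier_vec n" "v \<in> carrier_vec n"
  shows "sqrt (sq_norm u) - sqrt (sq_norm v) \<le> sqrt (sq_norm (u + v))"
proof -
  have "u = (u + v) + (-1) \<cdot>\<^sub>v v" using assms by (intro eq_vecI) auto
  hence "sqrt (sq_norm u) \<le> sqrt (sq_norm (u + v)) + sqrt (sq_norm ((-1) \<cdot>\<^sub>v v))"
    using sqrt_sq_norm_add_le[of "u + v" n "(-1) \<cdot>\<^sub>v v"] assms by (metis add_carrier_vec smult_carrier_vec)
  thus ?thesis unfolding sq_norm_smult by simp
qed

lemma col_sub_carrier: "col_sub X js \<in> carrier_mat (dim_row X) (length js)"
  unfolding col_sub_def using mat_of_cols_carrier(1)[of "dim_row X" "map (col X) js"] by simp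

lemma col_sub_dims [simp]: "dim_row (col_sub X js) = dim_row X" "dim_col (col_sub X js) = length js"
  unfolding col_sub_def by simp_all

lemma col_col_sub: "j < length js \<Longrightarrow> col (col_sub X js) j = col X (js ! j)"
  unfolding col_sub_def by (subst col_mat_of_cols) (auto simp: col_def)

lemma col_sub_mult_vec_nth:
  assumes "i < dim_row X" "v \<in> carrier_vec (length js)"
  shows "(col_sub X js *\<^sub>v v) $ i = (\<Sum>j<length js. X $$ (i, js ! j) * v $ j)"
  using assms by (simp add: scalar_prod_def col_sub_def mat_of_cols_def col_def atLeast0LessThan row_def)

lemma scalar_prod_col: "w \<in> carrier_vec (dim_row X) \<Longrightarrow> col X x \<bullet> w = (\<Sum>i<dim_row X. X $$ (i, x) * w $ i)"
  unfolding scalar_prod_def by (simp add: col_def atLeast0LessThan)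

lemma sum_nth_distinct: "distinct js \<Longrightarrow> (\<Sum>j<length js. g (js ! j)) = (\<Sum>x\<in>set js. g x)"
  using sum.reindex_bij_betw[OF bij_betw_nth[OF _ refl refl], of js g] by simp

text \<open>Coefficients are functions on the column indices, so no order on \<open>S\<close> has to be fixed.\<close>

definition in_col_span :: "real mat \<Rightarrow> nat set \<Rightarrow> real Matrix.vec \<Rightarrow> bool" where
  "in_col_span X S u \<longleftrightarrow> (\<exists>c. \<forall>i<dim_row X. u $ i = (\<Sum>x\<in>S. X $$ (i, x) * c x))"

definition cols_indep :: "real mat \<Rightarrow> nat set \<Rightarrow> bool" where
  "cols_indep X S \<longleftrightarrow> (\<forall>c. (\<forall>i<dim_row X. (\<Sum>x\<in>S. X $$ (i, x) * c x) = 0) \<longrightarrow> (\<forall>x\<in>S. c x = 0))"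

lemma scalar_prod_eq_0_if_orthogonal_to_cols:
  assumes u: "u \<in> carrier_vec (dim_row X)" and w: "w \<in> carrier_vec (dim_row X)"
    and span: "in_col_span X S u" and orth: "\<forall>x\<in>S. col X x \<bullet> w = 0"
  shows "w \<bullet> u = 0"
proof -
  obtain c where c: "\<forall>i<dim_row X. u $ i = (\<Sum>x\<in>S. X $$ (i, x) * c x)"
    using span unfolding in_col_span_def by auto
  have "w \<bullet> u = (\<Sum>i<dim_row X. \<Sum>x\<in>S. w $ i * (X $$ (i, x) * c x))"
    unfolding scalar_prod_def using u c by (simp add: atLeast0LessThan sum_distrib_left)
  also have "\<dots> = (\<Sum>x\<in>S. c x * (\<Sum>i<dim_row X. X $$ (i, x) * w $ i))"
    by (subst sum.swap) (simp add: sum_distrib_left mult_ac)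
  also have "\<dots> = 0" using orth scalar_prod_col[OF w] by simp
  finally show ?thesis .
qed

lemma eq_0_if_in_col_span_orthogonal:
  assumes u: "u \<in> carrier_vec (dim_row X)" and "in_col_span X S u" and "\<forall>x\<in>S. col X x \<bullet> u = 0"
  shows "u = 0\<^sub>v (dim_row X)"
  using scalar_prod_eq_0_if_orthogonal_to_cols[OF u u assms(2,3)] sq_norm_eq_0_iff[OF u]
  unfolding sq_norm_def by simp

lemma in_col_span_diff:
  assumes "in_col_span X S u" "in_col_span X S v" "v \<in> carrier_vec (dim_row X)"
  shows "in_col_span X S (u - v)"
proof -
  obtain c d where c: "\<forall>i<dim_row X. u $ i = (\<Sum>x\<in>S. X $$ (i, x) * c x)"
    and d: "\<forall>i<dim_row X. v $ i = (\<Sum>x\<in>S. X $$ (i, x) * d x)"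
    using assms(1,2) unfolding in_col_span_def by blast
  have "(u - v) $ i = (\<Sum>x\<in>S. X $$ (i, x) * (c x - d x))" if i: "i < dim_row X" for i
  proof -
    have "(u - v) $ i = (\<Sum>x\<in>S. X $$ (i, x) * c x) - (\<Sum>x\<in>S. X $$ (i, x) * d x)"
      using c d i assms(3) by simp
    thus ?thesis by (simp add: right_diff_distrib sum_subtractf)
  qed
  thus ?thesis unfolding in_col_span_def by (intro exI[of _ "\<lambda>x. c x - d x"]) blast
qed

lemma in_col_span_subset:
  assumes "in_col_span X S u" "S \<subseteq> T" "finite T" shows "in_col_span X T u"
proof -
  obtain c where c: "\<forall>i<dim_row X. u $ i = (\<Sum>x\<in>S. X $$ (i, x) * c x)"
    using assms unfolding in_col_span_def by auto
  have "(\<Sum>x\<in>S. X $$ (i, x) * c x) = (\<Sum>x\<in>T. X $$ (i, x) * (if x \<in> S then c x else 0))" for i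
    using assms(2,3) by (intro sum.mono_neutral_cong_left) auto
  hence "\<forall>i<dim_row X. u $ i = (\<Sum>x\<in>T. X $$ (i, x) * (if x \<in> S then c x else 0))" using c by simp
  thus ?thesis unfolding in_col_span_def by (rule exI[of _ "\<lambda>x. if x \<in> S then c x else 0"])
qed

lemma col_sub_mult_vec_as_sum:
  assumes "distinct js" "v \<in> carrier_vec (length js)"
  obtains c where "\<forall>j<length js. c (js ! j) = v $ j"
    "\<forall>i<dim_row X. (col_sub X js *\<^sub>v v) $ i = (\<Sum>x\<in>set js. X $$ (i, x) * c x)"
proof -
  define c where "c = (\<lambda>x. v $ (the_inv_into {..<length js} ((!) js) x))"
  have "inj_on ((!) js) {..<length js}" using bij_betw_imp_inj_on[OF bij_betw_nth[OF assms(1) refl refl]] .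
  hence cj: "\<forall>j<length js. c (js ! j) = v $ j" unfolding c_def using the_inv_into_f_f by fastforce
  have "(col_sub X js *\<^sub>v v) $ i = (\<Sum>x\<in>set js. X $$ (i, x) * c x)" if "i < dim_row X" for i
    unfolding col_sub_mult_vec_nth[OF that assms(2)] sum_nth_distinct[OF assms(1), symmetric]
    using cj by simp
  with cj that show ?thesis by blast
qed

lemma in_col_span_col_sub_mult_vec:
  assumes "distinct js" "v \<in> carrier_vec (length js)"
  shows "in_col_span X (set js) (col_sub X js *\<^sub>v v)"
proof -
  obtain c where "\<forall>i<dim_row X. (col_sub X js *\<^sub>v v) $ i = (\<Sum>x\<in>set js. X $$ (i, x) * c x)"
    using col_sub_mult_vec_as_sum[OF assms] by blast
  thus ?thesis unfolding in_col_span_def by (rule exI[of _ c])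
qed

lemma in_col_span_imp_col_sub_mult_vec:
  assumes "distinct js" "in_col_span X (set js) u" "u \<in> carrier_vec (dim_row X)"
  obtains a where "a \<in> carrier_vec (length js)" "u = col_sub X js *\<^sub>v a"
proof -
  obtain c where c: "\<forall>i<dim_row X. u $ i = (\<Sum>x\<in>set js. X $$ (i, x) * c x)"
    using assms unfolding in_col_span_def by auto
  define a where "a = Matrix.vec (length js) (\<lambda>j. c (js ! j))"
  have a: "a \<in> carrier_vec (length js)" unfolding a_def by simp
  have "(col_sub X js *\<^sub>v a) $ i = u $ i" if "i < dim_row X" for i
  proof -
    have "(col_sub X js *\<^sub>v a) $ i = (\<Sum>j<length js. X $$ (i, js ! j) * c (js ! j))"
      unfolding col_sub_mult_vec_nth[OF that a] by (simp add: a_def)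
    also have "\<dots> = u $ i"
      using c that sum_nth_distinct[OF assms(1), of "\<lambda>x. X $$ (i, x) * c x"] by simp
    finally show ?thesis .
  qed
  hence "u = col_sub X js *\<^sub>v a" using assms(3) by (intro eq_vecI) auto
  with a that show ?thesis by blast
qed

lemma full_col_rank_distinct:
  assumes fr: "full_col_rank (col_sub X js)" shows "distinct js"
proof (rule ccontr)
  assume "\<not> distinct js"
  then obtain a b where ab: "a < length js" "b < length js" "a \<noteq> b" "js ! a = js ! b"
    unfolding distinct_conv_nth by blast
  define v :: "real Matrix.vec" where
    "v = Matrix.vec (length js) (\<lambda>j. (if j = a then 1 else 0) - (if j = b then 1 else 0))"
  have v: "v \<in> carrier_vec (length js)" unfolding v_def by simp
  have "(col_sub X js *\<^sub>v v) $ i = 0" if i: "i < dim_row X" for i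
  proof -
    have "(col_sub X js *\<^sub>v v) $ i = (\<Sum>j<length js. if j = a then X $$ (i, js ! j) else 0)
        - (\<Sum>j<length js. if j = b then X $$ (i, js ! j) else 0)"
      unfolding col_sub_mult_vec_nth[OF i v] sum_subtractf[symmetric]
      by (rule sum.cong) (auto simp: v_def)
    thus ?thesis using ab by simp
  qed
  hence "col_sub X js *\<^sub>v v = 0\<^sub>v (dim_row X)" by (intro eq_vecI) auto
  hence "v = 0\<^sub>v (length js)" using fr v unfolding full_col_rank_def by simp
  moreover have "v $ a = 1" unfolding v_def using ab by simp
  ultimately show False using ab by simp
qed

lemma full_col_rank_cols_indep:
  assumes fr: "full_col_rank (col_sub X js)" shows "cols_indep X (set js)"
  unfolding cols_indep_def
proof (intro allI impI)
  fix c assume c: "\<forall>i<dim_row X. (\<Sum>x\<in>set js. X $$ (i, x) * c x) = 0"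
  define v where "v = Matrix.vec (length js) (\<lambda>j. c (js ! j))"
  have v: "v \<in> carrier_vec (length js)" unfolding v_def by simp
  have "(col_sub X js *\<^sub>v v) $ i = 0" if "i < dim_row X" for i
    unfolding col_sub_mult_vec_nth[OF that v]
    using c that sum_nth_distinct[OF full_col_rank_distinct[OF fr], of "\<lambda>x. X $$ (i, x) * c x"]
    by (simp add: v_def)
  hence "col_sub X js *\<^sub>v v = 0\<^sub>v (dim_row X)" by (intro eq_vecI) auto
  hence "v = 0\<^sub>v (length js)" using fr v unfolding full_col_rank_def by simp
  show "\<forall>x\<in>set js. c x = 0"
  proof
    fix x assume "x \<in> set js"
    then obtain j where "j < length js" "x = js ! j" by (auto simp: in_set_conv_nth)
    moreover from this have "v $ j = 0" using \<open>v = 0\<^sub>v (length js)\<close> by simp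
    ultimately show "c x = 0" unfolding v_def by simp
  qed
qed

lemma cols_indep_full_col_rank:
  assumes d: "distinct js" and ind: "cols_indep X (set js)" shows "full_col_rank (col_sub X js)"
  unfolding full_col_rank_def
proof (intro allI impI)
  fix v :: "real Matrix.vec" assume v: "v \<in> carrier_vec (dim_col (col_sub X js))"
    and z: "col_sub X js *\<^sub>v v = 0\<^sub>v (dim_row (col_sub X js))"
  obtain c where cj: "\<forall>j<length js. c (js ! j) = v $ j"
    and cs: "\<forall>i<dim_row X. (col_sub X js *\<^sub>v v) $ i = (\<Sum>x\<in>set js. X $$ (i, x) * c x)"
    using col_sub_mult_vec_as_sum[OF d] v by auto
  have "(\<Sum>x\<in>set js. X $$ (i, x) * c x) = 0" if "i < dim_row X" for i
  proof -
    have "(col_sub X js *\<^sub>v v) $ i = 0" using z that by simp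
    thus ?thesis using cs that by simp
  qed
  hence "\<forall>x\<in>set js. c x = 0" using ind unfolding cols_indep_def by blast
  thus "v = 0\<^sub>v (dim_col (col_sub X js))" using v cj by (intro eq_vecI) auto
qed

lemma full_col_rank_col_sub_iff: "full_col_rank (col_sub X js) \<longleftrightarrow> distinct js \<and> cols_indep X (set js)"
  using full_col_rank_distinct full_col_rank_cols_indep cols_indep_full_col_rank by blast

lemma full_col_rank_col_sub_set_cong:
  assumes "full_col_rank (col_sub X js)" "set js' = set js" "length js' = length js"
  shows "full_col_rank (col_sub X js')"
  using assms full_col_rank_col_sub_iff by (metis card_distinct distinct_card)

lemma cols_indep_subset:
  assumes ind: "cols_indep X T" and sub: "S \<subseteq> T" and fin: "finite T" shows "cols_indep X S"
  unfolding cols_indep_def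
proof (intro allI impI)
  fix c assume c: "\<forall>i<dim_row X. (\<Sum>x\<in>S. X $$ (i, x) * c x) = 0"
  define c' where "c' = (\<lambda>x. if x \<in> S then c x else 0)"
  have "(\<Sum>x\<in>T. X $$ (i, x) * c' x) = (\<Sum>x\<in>S. X $$ (i, x) * c x)" for i
    using sub fin by (intro sum.mono_neutral_cong_right) (auto simp: c'_def)
  hence "\<forall>x\<in>T. c' x = 0" using ind c unfolding cols_indep_def by simp
  thus "\<forall>x\<in>S. c x = 0" using sub unfolding c'_def by (metis subsetD)
qed

lemma gram_inverse:
  fixes A :: "real mat"
  assumes A: "A \<in> carrier_mat n m" and fr: "full_col_rank A"
  obtains B where "mat_inverse (A\<^sup>T * A) = Some B" "(A\<^sup>T * A) * B = 1\<^sub>m m" "B * (A\<^sup>T * A) = 1\<^sub>m m"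
    "B \<in> carrier_mat m m" "B\<^sup>T = B"
proof -
  let ?G = "A\<^sup>T * A"
  have G: "?G \<in> carrier_mat m m" using A by simp
  have "det ?G \<noteq> 0"
  proof
    assume "det ?G = 0"
    then obtain v where v: "v \<in> carrier_vec m" "v \<noteq> 0\<^sub>v m" "?G *\<^sub>v v = 0\<^sub>v m"
      using det_0_iff_vec_prod_zero_field[OF G] by blast
    have Av: "A *\<^sub>v v \<in> carrier_vec n" using A v by simp
    have "sq_norm (A *\<^sub>v v) = (A\<^sup>T *\<^sub>v (A *\<^sub>v v)) \<bullet> v"
      unfolding sq_norm_def using transpose_vec_mult_scalar[OF A v(1) Av] by simp
    also have "A\<^sup>T *\<^sub>v (A *\<^sub>v v) = ?G *\<^sub>v v" using A v by simp
    finally have "A *\<^sub>v v = 0\<^sub>v n" using sq_norm_eq_0_iff[OF Av] v by simp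
    hence "v = 0\<^sub>v m" using fr A v unfolding full_col_rank_def by auto
    thus False using v by simp
  qed
  hence "?G \<in> Units (ring_mat TYPE(real) m ())" by (rule det_non_zero_imp_unit[OF G])
  then obtain B where B: "mat_inverse ?G = Some B"
    using mat_inverse(1)[OF G, of "()"] by (cases "mat_inverse ?G") auto
  have BB: "?G * B = 1\<^sub>m m" "B * ?G = 1\<^sub>m m" "B \<in> carrier_mat m m"
    using mat_inverse(2)[OF G B] by auto
  have "?G\<^sup>T = ?G" using A by (simp add: transpose_mult[of "A\<^sup>T" m n A m])
  hence "B\<^sup>T * ?G = 1\<^sub>m m" using BB(1) transpose_mult[OF G BB(3)] by simp
  hence "B\<^sup>T = B\<^sup>T * (?G * B)" using BB by simp
  also have "\<dots> = (B\<^sup>T * ?G) * B" using BB G by (simp add: assoc_mult_mat[of _ m m _ m _ m])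
  also have "\<dots> = B" using \<open>B\<^sup>T * ?G = 1\<^sub>m m\<close> BB by simp
  finally show ?thesis using that B BB by blast
qed

lemma proj_carrier: "proj X js \<in> carrier_mat (dim_row X) (dim_row X)"
  unfolding proj_def pinv_def carrier_mat_def
  by (simp only: index_mult_mat(2,3) index_transpose_mat(2,3) col_sub_dims mem_Collect_eq conj_absorb)

lemma omp_resid_carrier: "y \<in> carrier_vec (dim_row X) \<Longrightarrow> omp_resid X y js \<in> carrier_vec (dim_row X)"
  unfolding omp_resid_def using proj_carrier[of X js] by (auto intro: minus_carrier_vec)

lemma proj_normal_equations:
  assumes fr: "full_col_rank (col_sub X js)" and y: "y \<in> carrier_vec (dim_row X)"
  obtains a where "a \<in> carrier_vec (length js)" "proj X js *\<^sub>v y = col_sub X js *\<^sub>v a"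
    "(col_sub X js)\<^sup>T *\<^sub>v (y - proj X js *\<^sub>v y) = 0\<^sub>v (length js)"
proof -
  let ?n = "dim_row X" and ?m = "length js" and ?A = "col_sub X js"
  have A: "?A \<in> carrier_mat ?n ?m" by (rule col_sub_carrier)
  obtain B where B: "mat_inverse (?A\<^sup>T * ?A) = Some B" "(?A\<^sup>T * ?A) * B = 1\<^sub>m ?m"
    "B \<in> carrier_mat ?m ?m"
    using gram_inverse[OF A fr] by blast
  have At: "?A\<^sup>T \<in> carrier_mat ?m ?n" using A by simp
  have ATy: "?A\<^sup>T *\<^sub>v y \<in> carrier_vec ?m" using At y by simp
  define a where "a = B *\<^sub>v (?A\<^sup>T *\<^sub>v y)"
  have a: "a \<in> carrier_vec ?m" unfolding a_def using B(3) ATy by simp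
  have "proj X js *\<^sub>v y = (?A * (B * ?A\<^sup>T)) *\<^sub>v y" unfolding proj_def pinv_def B(1) by simp
  also have "\<dots> = ?A *\<^sub>v ((B * ?A\<^sup>T) *\<^sub>v y)" by (rule assoc_mult_mat_vec[OF A mult_carrier_mat[OF B(3) At] y])
  also have "(B * ?A\<^sup>T) *\<^sub>v y = a" unfolding a_def by (rule assoc_mult_mat_vec[OF B(3) At y])
  finally have Py: "proj X js *\<^sub>v y = ?A *\<^sub>v a" .
  have G: "?A\<^sup>T * ?A \<in> carrier_mat ?m ?m" using A by simp
  have "?A\<^sup>T *\<^sub>v (?A *\<^sub>v a) = (?A\<^sup>T * ?A) *\<^sub>v a" by (rule assoc_mult_mat_vec[OF At A a, symmetric])
  also have "\<dots> = ((?A\<^sup>T * ?A) * B) *\<^sub>v (?A\<^sup>T *\<^sub>v y)"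
    unfolding a_def by (rule assoc_mult_mat_vec[OF G B(3) ATy, symmetric])
  also have "\<dots> = ?A\<^sup>T *\<^sub>v y" unfolding B(2) using ATy by simp
  finally have "?A\<^sup>T *\<^sub>v (y - ?A *\<^sub>v a) = 0\<^sub>v ?m"
    using mult_minus_distrib_mat_vec[OF At y, of "?A *\<^sub>v a"] A a ATy by simp
  with a Py that show ?thesis by simp
qed

text \<open>Under this condition \<open>omp_resid X y js\<close> is the residual of the orthogonal projection of \<open>y\<close> onto
  the span of \<open>X\<^sub>J\<close>; without full rank, \<open>pinv\<close> is built from an unspecified \<open>the None\<close>.\<close>

definition proj_regular :: "real mat \<Rightarrow> nat list \<Rightarrow> bool" where
  "proj_regular X js \<longleftrightarrow> js = [] \<or> full_col_rank (col_sub X js)"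

lemma omp_resid_orthogonal:
  assumes reg: "proj_regular X js" and y: "y \<in> carrier_vec (dim_row X)" and x: "x \<in> set js"
  shows "col X x \<bullet> omp_resid X y js = 0"
proof -
  have fr: "full_col_rank (col_sub X js)" and ne: "js \<noteq> []" using reg x unfolding proj_regular_def by auto
  obtain a where z: "(col_sub X js)\<^sup>T *\<^sub>v (y - proj X js *\<^sub>v y) = 0\<^sub>v (length js)"
    using proj_normal_equations[OF fr y] .
  obtain j where j: "j < length js" "x = js ! j" using x by (auto simp: in_set_conv_nth)
  have "((col_sub X js)\<^sup>T *\<^sub>v (y - proj X js *\<^sub>v y)) $ j = col (col_sub X js) j \<bullet> (y - proj X js *\<^sub>v y)"
    using j by simp
  thus ?thesis using z j ne col_col_sub[OF j(1)] unfolding omp_resid_def by simp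
qed

lemma omp_resid_complement_in_span:
  assumes reg: "proj_regular X js" and y: "y \<in> carrier_vec (dim_row X)"
  shows "in_col_span X (set js) (y - omp_resid X y js)"
proof (cases "js = []")
  case True
  thus ?thesis using y unfolding omp_resid_def in_col_span_def by simp
next
  case False
  hence fr: "full_col_rank (col_sub X js)" using reg unfolding proj_regular_def by simp
  obtain a where a: "a \<in> carrier_vec (length js)" "proj X js *\<^sub>v y = col_sub X js *\<^sub>v a"
    using proj_normal_equations[OF fr y] .
  have "y - (y - proj X js *\<^sub>v y) = proj X js *\<^sub>v y"
    using y proj_carrier[of X js] by (intro eq_vecI) auto
  thus ?thesis using False a in_col_span_col_sub_mult_vec[OF full_col_rank_distinct[OF fr] a(1)]
    unfolding omp_resid_def by simp
qed

lemma omp_resid_nth: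
  assumes y: "y \<in> carrier_vec (dim_row X)" and i: "i < dim_row X"
  shows "omp_resid X y js $ i =
    (if js = [] then y $ i else y $ i - (\<Sum>j<dim_row X. proj X js $$ (i, j) * y $ j))"
proof -
  have P: "proj X js \<in> carrier_mat (dim_row X) (dim_row X)" by (rule proj_carrier)
  have "(proj X js *\<^sub>v y) $ i = (\<Sum>j<dim_row X. proj X js $$ (i, j) * y $ j)"
    using P y i by (simp add: scalar_prod_def row_def atLeast0LessThan)
  thus ?thesis unfolding omp_resid_def using P y i by simp
qed

lemma omp_resid_add:
  assumes "y1 \<in> carrier_vec (dim_row X)" "y2 \<in> carrier_vec (dim_row X)"
  shows "omp_resid X (y1 + y2) js = omp_resid X y1 js + omp_resid X y2 js"
  unfolding omp_resid_def using assms proj_carrier[of X js]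
  by (auto simp: mult_add_distrib_mat_vec[OF proj_carrier] intro!: eq_vecI)

lemma omp_resid_smult:
  assumes "y \<in> carrier_vec (dim_row X)"
  shows "omp_resid X (c \<cdot>\<^sub>v y) js = c \<cdot>\<^sub>v omp_resid X y js"
  unfolding omp_resid_def using assms proj_carrier[of X js]
  by (auto simp: mult_mat_vec[OF proj_carrier] algebra_simps intro!: eq_vecI)

lemma sq_norm_omp_resid_le:
  assumes reg: "proj_regular X js" and y: "y \<in> carrier_vec (dim_row X)"
  shows "sq_norm (omp_resid X y js) \<le> sq_norm y"
proof -
  let ?r = "omp_resid X y js"
  have r: "?r \<in> carrier_vec (dim_row X)" using omp_resid_carrier[OF y] .
  have d: "y - ?r \<in> carrier_vec (dim_row X)" using y r by simp
  have "?r \<bullet> (y - ?r) = 0"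
    using scalar_prod_eq_0_if_orthogonal_to_cols[OF d r omp_resid_complement_in_span[OF reg y]]
      omp_resid_orthogonal[OF reg y] by blast
  moreover have "y = ?r + (y - ?r)" using y r by (intro eq_vecI) auto
  ultimately have "sq_norm y = sq_norm ?r + sq_norm (y - ?r)"
    using sq_norm_add[OF r d] by simp
  thus ?thesis using sq_norm_nonneg[of "y - ?r"] by linarith
qed

lemma omp_resid_in_span_eq_0:
  assumes reg: "proj_regular X js" and u: "u \<in> carrier_vec (dim_row X)" and span: "in_col_span X (set js) u"
  shows "omp_resid X u js = 0\<^sub>v (dim_row X)"
proof -
  let ?r = "omp_resid X u js"
  have r: "?r \<in> carrier_vec (dim_row X)" using omp_resid_carrier[OF u] .
  have "u - (u - ?r) = ?r" using u r by (intro eq_vecI) auto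
  hence "in_col_span X (set js) ?r"
    using in_col_span_diff[OF span omp_resid_complement_in_span[OF reg u]] u r by simp
  thus ?thesis using eq_0_if_in_col_span_orthogonal[OF r] omp_resid_orthogonal[OF reg u] by blast
qed

lemma omp_resid_set_cong:
  assumes reg1: "proj_regular X js1" and reg2: "proj_regular X js2" and S: "set js1 = set js2"
    and y: "y \<in> carrier_vec (dim_row X)"
  shows "omp_resid X y js1 = omp_resid X y js2"
proof -
  let ?r1 = "omp_resid X y js1" and ?r2 = "omp_resid X y js2"
  have r1: "?r1 \<in> carrier_vec (dim_row X)" and r2: "?r2 \<in> carrier_vec (dim_row X)"
    using omp_resid_carrier[OF y] by auto
  have "(y - ?r2) - (y - ?r1) = ?r1 - ?r2" using y r1 r2 by (intro eq_vecI) auto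
  moreover have "in_col_span X (set js1) ((y - ?r2) - (y - ?r1))"
    using in_col_span_diff[OF _ omp_resid_complement_in_span[OF reg1 y]] S
      omp_resid_complement_in_span[OF reg2 y] y r1 by simp
  ultimately have "in_col_span X (set js1) (?r1 - ?r2)" by simp
  moreover have "\<forall>x\<in>set js1. col X x \<bullet> (?r1 - ?r2) = 0"
    using omp_resid_orthogonal[OF reg1 y] omp_resid_orthogonal[OF reg2 y] S r1 r2
    by (simp add: scalar_prod_minus_distrib[of _ "dim_row X"] col_def)
  ultimately have diff_0: "?r1 - ?r2 = 0\<^sub>v (dim_row X)"
    using eq_0_if_in_col_span_orthogonal[of "?r1 - ?r2"] r1 r2 by simp
  show ?thesis
  proof (rule eq_vecI)
    fix i assume "i < dim_vec ?r2"
    hence "i < dim_row X" using r2 by simp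
    moreover from this have "(?r1 - ?r2) $ i = 0" using diff_0 by simp
    ultimately show "?r1 $ i = ?r2 $ i" using r2 by simp
  qed (use r1 r2 in simp)
qed

lemma pinv_carrier:
  assumes A: "A \<in> carrier_mat n m" and fr: "full_col_rank A"
  shows "pinv A \<in> carrier_mat m n"
proof -
  obtain B where "mat_inverse (A\<^sup>T * A) = Some B" "B \<in> carrier_mat m m"
    using gram_inverse[OF A fr] by blast
  thus ?thesis unfolding pinv_def using A by simp
qed

lemma scalar_prod_pinv:
  fixes A :: "real mat"
  assumes A: "A \<in> carrier_mat n m" and fr: "full_col_rank A"
    and a: "a \<in> carrier_vec m" and x: "x \<in> carrier_vec n"
  shows "x \<bullet> (A *\<^sub>v a) = (pinv A *\<^sub>v x) \<bullet> (A\<^sup>T *\<^sub>v (A *\<^sub>v a))"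
proof -
  obtain B where B: "mat_inverse (A\<^sup>T * A) = Some B" "B * (A\<^sup>T * A) = 1\<^sub>m m"
    "B \<in> carrier_mat m m" "B\<^sup>T = B"
    using gram_inverse[OF A fr] by blast
  have At: "A\<^sup>T \<in> carrier_mat m n" using A by simp
  have G: "A\<^sup>T * A \<in> carrier_mat m m" using A by simp
  define h where "h = A\<^sup>T *\<^sub>v (A *\<^sub>v a)"
  have h: "h \<in> carrier_vec m" unfolding h_def using At A a by simp
  have "B *\<^sub>v h = (B * (A\<^sup>T * A)) *\<^sub>v a"
    unfolding h_def using assoc_mult_mat_vec[OF At A a] assoc_mult_mat_vec[OF B(3) G a] by simp
  hence Bh: "B *\<^sub>v h = a" unfolding B(2) using a by simp
  have Atx: "A\<^sup>T *\<^sub>v x \<in> carrier_vec m" using At x by simp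
  have "pinv A *\<^sub>v x = B *\<^sub>v (A\<^sup>T *\<^sub>v x)"
    unfolding pinv_def B(1) by (simp add: assoc_mult_mat_vec[OF B(3) At x])
  moreover have "x \<bullet> (A *\<^sub>v a) = (A\<^sup>T *\<^sub>v x) \<bullet> (B *\<^sub>v h)" using transpose_vec_mult_scalar[OF A a x] Bh by simp
  ultimately show ?thesis using transpose_vec_mult_scalar[OF B(3) h Atx] B(4) unfolding h_def by simp
qed

lemma abs_scalar_prod_le_l1_norm:
  assumes g: "g \<in> carrier_vec m" and h: "h \<in> carrier_vec m" and bound: "\<forall>l<m. \<bar>h $ l\<bar> \<le> M"
  shows "\<bar>g \<bullet> h\<bar> \<le> l1_norm g * M"
proof -
  have "\<bar>g \<bullet> h\<bar> \<le> (\<Sum>l<m. \<bar>g $ l * h $ l\<bar>)"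
    unfolding scalar_prod_def using h sum_abs by (simp add: atLeast0LessThan)
  also have "\<dots> \<le> (\<Sum>l<m. \<bar>g $ l\<bar> * M)"
    by (rule sum_mono) (simp add: abs_mult bound mult_left_mono)
  also have "\<dots> = l1_norm g * M" unfolding l1_norm_def using g by (simp add: sum_distrib_right)
  finally show ?thesis .
qed

section \<open>Orthogonal matching pursuit under small noise\<close>

lemma length_omp_indices [simp]: "length (omp_indices X y k) = k"
  by (induction k) (simp_all add: Let_def)

lemma omp_indices_Suc: "omp_indices X y (Suc k) = omp_indices X y k @ [omp_select X (omp_res X y k)]"
  by (simp add: Let_def omp_res_def)

lemma take_omp_indices: "k \<le> m \<Longrightarrow> take k (omp_indices X y m) = omp_indices X y k"
proof (induction m)
  case (Suc m)
  thus ?case by (cases "k = Suc m") (simp_all del: omp_indices.simps(2) add: omp_indices_Suc)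
qed simp

lemma omp_select_maximal:
  assumes "0 < dim_col X"
  shows "omp_select X r < dim_col X" "\<forall>s<dim_col X. \<bar>col X s \<bullet> r\<bar> \<le> \<bar>col X (omp_select X r) \<bullet> r\<bar>"
proof -
  let ?f = "\<lambda>s. \<bar>col X s \<bullet> r\<bar>"
  have "Max (?f ` {..<dim_col X}) \<in> ?f ` {..<dim_col X}" using assms by (intro Max_in) auto
  then obtain t where "t \<in> {..<dim_col X}" "?f t = Max (?f ` {..<dim_col X})" by auto
  hence "\<exists>t. t < dim_col X \<and> (\<forall>s<dim_col X. ?f s \<le> ?f t)" by auto
  from LeastI_ex[OF this] show "omp_select X r < dim_col X" "\<forall>s<dim_col X. ?f s \<le> ?f (omp_select X r)"
    unfolding omp_select_def by auto
qed

lemma omp_select_smult: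
  assumes "c > 0" and "r \<in> carrier_vec (dim_row X)"
  shows "omp_select X (c \<cdot>\<^sub>v r) = omp_select X r"
proof -
  have "\<bar>col X s \<bullet> (c \<cdot>\<^sub>v r)\<bar> = c * \<bar>col X s \<bullet> r\<bar>" for s
    using assms by (simp add: col_def abs_mult)
  thus ?thesis unfolding omp_select_def using assms(1) by simp
qed

lemma erc_correlation_bound:
  assumes fr: "full_col_rank (col_sub X js)"
    and a: "a \<in> carrier_vec (length js)" and x: "x \<in> carrier_vec (dim_row X)"
  shows "\<bar>x \<bullet> (col_sub X js *\<^sub>v a)\<bar> \<le>
     l1_norm (pinv (col_sub X js) *\<^sub>v x) * Max ((\<lambda>i. \<bar>col X i \<bullet> (col_sub X js *\<^sub>v a)\<bar>) ` set js)"
proof -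
  let ?A = "col_sub X js"
  have A: "?A \<in> carrier_mat (dim_row X) (length js)" by (rule col_sub_carrier)
  have "\<bar>(?A\<^sup>T *\<^sub>v (?A *\<^sub>v a)) $ l\<bar> \<le> Max ((\<lambda>i. \<bar>col X i \<bullet> (?A *\<^sub>v a)\<bar>) ` set js)"
    if l: "l < length js" for l
    using l A col_col_sub[OF l] by (auto intro: Max_ge)
  moreover have "pinv ?A *\<^sub>v x \<in> carrier_vec (length js)"
    using pinv_carrier[OF A fr] x by simp
  ultimately show ?thesis
    unfolding scalar_prod_pinv[OF A fr a x] using A a by (intro abs_scalar_prod_le_l1_norm) auto
qed

locale erc_model =
  fixes X :: "real mat" and \<beta> :: "real Matrix.vec" and I :: "nat set" and n p k0 :: nat
  assumes X_dim: "X \<in> carrier_mat n p"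
    and beta_dim: "\<beta> \<in> carrier_vec p"
    and unit_cols: "\<forall>j<p. sq_norm (col X j) = 1"
    and supp: "I = {j. j < p \<and> \<beta> $ j \<noteq> 0}"
    and card_I: "card I = k0" and k0_pos: "k0 \<ge> 1"
    and ERC_rank: "full_col_rank (col_sub X (sorted_list_of_set I))"
    and ERC: "\<forall>j<p. j \<notin> I \<longrightarrow> l1_norm (pinv (col_sub X (sorted_list_of_set I)) *\<^sub>v col X j) < 1"
begin

definition signal :: "real Matrix.vec" where
  "signal = X *\<^sub>v \<beta>"

abbreviation omp_idx :: "real Matrix.vec \<Rightarrow> nat \<Rightarrow> nat list" where
  "omp_idx e k \<equiv> omp_indices X (signal + e) k"

text \<open>The index lists OMP may have produced before it has found all of \<open>I\<close>. There are finitely many,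
  so the noiseless quantities below attain positive minima over them.\<close>

definition partial_supports :: "nat list set" where
  "partial_supports = {J. distinct J \<and> set J \<subset> I}"

definition clean_resid :: "nat list \<Rightarrow> real Matrix.vec" where
  "clean_resid J = omp_resid X signal J"

definition max_corr :: "nat list \<Rightarrow> real" where
  "max_corr J = Max ((\<lambda>i. \<bar>col X i \<bullet> clean_resid J\<bar>) ` I)"

definition min_clean_resid :: real where
  "min_clean_resid = Min ((\<lambda>J. sq_norm (clean_resid J)) ` partial_supports)"

definition min_max_corr :: real where
  "min_max_corr = Min (max_corr ` partial_supports)"

text \<open>The \<open>\<union> {0}\<close> keeps the maximum defined when every column lies in \<open>I\<close>.\<close>

definition erc_const :: real where
  "erc_const = Max ((\<lambda>j. l1_norm (pinv (col_sub X (sorted_list_of_set I)) *\<^sub>v col X j))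
                      ` {j. j < p \<and> j \<notin> I} \<union> {0})"

definition noise_radius :: real where
  "noise_radius = (1 - erc_const) * min_max_corr / 2"

lemma dims [simp]: "dim_row X = n" "dim_col X = p"
  using X_dim by auto

lemma I_subset: "I \<subseteq> {..<p}"
  using supp by auto

lemma finite_I: "finite I"
  using I_subset finite_subset by blast

lemma I_nonempty: "I \<noteq> {}"
  using card_I k0_pos by (cases "I = {}") auto

lemma supp_list: "set (sorted_list_of_set I) = I" "distinct (sorted_list_of_set I)"
  using finite_I by auto

lemma col_carrier: "col X j \<in> carrier_vec n"
  unfolding col_def by simp

lemma signal_carrier: "signal \<in> carrier_vec n"
  unfolding signal_def using X_dim beta_dim by simp

lemma signal_nth: "i < n \<Longrightarrow> signal $ i = (\<Sum>x\<in>I. X $$ (i, x) * \<beta> $ x)"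
  unfolding signal_def using X_dim beta_dim I_subset supp
  by (simp add: scalar_prod_def row_def atLeast0LessThan) (intro sum.mono_neutral_right; auto)

lemma signal_in_span: "in_col_span X I signal"
  unfolding in_col_span_def using signal_nth by (intro exI[of _ "\<lambda>x. \<beta> $ x"]) simp

lemma cols_indep_I: "cols_indep X I"
  using full_col_rank_cols_indep[OF ERC_rank] supp_list by simp

lemma proj_regular_if_subset: "distinct J \<Longrightarrow> set J \<subseteq> I \<Longrightarrow> proj_regular X J"
  unfolding proj_regular_def using cols_indep_full_col_rank cols_indep_subset[OF cols_indep_I _ finite_I]
  by blast

lemma proj_regular_partial: "J \<in> partial_supports \<Longrightarrow> proj_regular X J"
  using proj_regular_if_subset unfolding partial_supports_def by auto

lemma finite_partial_supports: "finite partial_supports"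
proof -
  have "partial_supports \<subseteq> {xs. set xs \<subseteq> I \<and> distinct xs}" unfolding partial_supports_def by auto
  thus ?thesis using finite_subset finite_subset_distinct[OF finite_I] by blast
qed

lemma Nil_partial_support: "[] \<in> partial_supports"
  unfolding partial_supports_def using I_nonempty by auto

lemma clean_resid_carrier: "clean_resid J \<in> carrier_vec n"
  unfolding clean_resid_def using omp_resid_carrier[of signal X J] signal_carrier by simp

lemma clean_resid_in_span:
  assumes J: "J \<in> partial_supports" shows "in_col_span X I (clean_resid J)"
proof -
  have "in_col_span X I (signal - clean_resid J)"
    using in_col_span_subset[OF omp_resid_complement_in_span[OF proj_regular_partial[OF J]] _ finite_I]
      J signal_carrier unfolding partial_supports_def clean_resid_def by auto
  moreover have "signal - (signal - clean_resid J) = clean_resid J"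
    using signal_carrier clean_resid_carrier by (intro eq_vecI) auto
  ultimately show ?thesis
    using in_col_span_diff[OF signal_in_span] signal_carrier clean_resid_carrier by (metis dims(1) minus_carrier_vec)
qed

text \<open>Before all of \<open>I\<close> is selected the noiseless residual is nonzero: otherwise \<open>X \<beta>\<close> would be a
  combination of fewer columns of \<open>X\<^sub>I\<close>, and independence would force some \<open>\<beta>\<^sub>x = 0\<close> with \<open>x \<in> I\<close>.\<close>

lemma clean_resid_nonzero:
  assumes J: "J \<in> partial_supports" shows "clean_resid J \<noteq> 0\<^sub>v n"
proof
  assume "clean_resid J = 0\<^sub>v n"
  hence "in_col_span X (set J) signal"
    using omp_resid_complement_in_span[OF proj_regular_partial[OF J], of signal] signal_carrier
    unfolding clean_resid_def by simp
  then obtain d where d: "\<forall>i<n. signal $ i = (\<Sum>x\<in>set J. X $$ (i, x) * d x)"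
    unfolding in_col_span_def by auto
  obtain x0 where x0: "x0 \<in> I" "x0 \<notin> set J" using J unfolding partial_supports_def by auto
  define c where "c = (\<lambda>x. \<beta> $ x - (if x \<in> set J then d x else 0))"
  have "(\<Sum>x\<in>I. X $$ (i, x) * c x) = 0" if i: "i < n" for i
  proof -
    have "(\<Sum>x\<in>I. X $$ (i, x) * (if x \<in> set J then d x else 0)) = (\<Sum>x\<in>set J. X $$ (i, x) * d x)"
      using J finite_I unfolding partial_supports_def by (intro sum.mono_neutral_cong_right) auto
    thus ?thesis unfolding c_def using d signal_nth[OF i] i by (simp add: right_diff_distrib sum_subtractf)
  qed
  hence "c x0 = 0" using cols_indep_I x0 unfolding cols_indep_def by simp
  thus False using x0 supp unfolding c_def by auto
qed

lemma max_corr_pos: assumes J: "J \<in> partial_supports" shows "max_corr J > 0"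
proof -
  have "\<exists>i\<in>I. col X i \<bullet> clean_resid J \<noteq> 0"
    using eq_0_if_in_col_span_orthogonal[of "clean_resid J" X I] clean_resid_carrier
      clean_resid_in_span[OF J] clean_resid_nonzero[OF J] by auto
  then obtain i where i: "i \<in> I" "0 < \<bar>col X i \<bullet> clean_resid J\<bar>" by auto
  have "\<bar>col X i \<bullet> clean_resid J\<bar> \<le> max_corr J" unfolding max_corr_def using i finite_I by (intro Max_ge) auto
  thus ?thesis using i by linarith
qed

lemma min_clean_resid_pos: "min_clean_resid > 0"
  and min_clean_resid_le: "J \<in> partial_supports \<Longrightarrow> min_clean_resid \<le> sq_norm (clean_resid J)"
proof -
  have "(\<lambda>J. sq_norm (clean_resid J)) ` partial_supports \<noteq> {}" using Nil_partial_support by auto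
  thus "min_clean_resid > 0" unfolding min_clean_resid_def
    using Min_gr_iff[OF finite_imageI[OF finite_partial_supports]]
      sq_norm_pos[OF clean_resid_carrier clean_resid_nonzero] by auto
  show "J \<in> partial_supports \<Longrightarrow> min_clean_resid \<le> sq_norm (clean_resid J)"
    unfolding min_clean_resid_def using finite_partial_supports by (intro Min_le) auto
qed

lemma min_max_corr_pos: "min_max_corr > 0"
  and min_max_corr_le: "J \<in> partial_supports \<Longrightarrow> min_max_corr \<le> max_corr J"
proof -
  have "max_corr ` partial_supports \<noteq> {}" using Nil_partial_support by auto
  thus "min_max_corr > 0" unfolding min_max_corr_def
    using Min_gr_iff[OF finite_imageI[OF finite_partial_supports]] max_corr_pos by auto
  show "J \<in> partial_supports \<Longrightarrow> min_max_corr \<le> max_corr J"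
    unfolding min_max_corr_def using finite_partial_supports by (intro Min_le) auto
qed

lemma erc_const_nonneg: "0 \<le> erc_const" and erc_const_less_1: "erc_const < 1"
  and erc_const_ge: "j < p \<Longrightarrow> j \<notin> I \<Longrightarrow> l1_norm (pinv (col_sub X (sorted_list_of_set I)) *\<^sub>v col X j) \<le> erc_const"
proof -
  let ?S = "(\<lambda>j. l1_norm (pinv (col_sub X (sorted_list_of_set I)) *\<^sub>v col X j)) ` {j. j < p \<and> j \<notin> I} \<union> {0}"
  have fin: "finite ?S" by simp
  show "0 \<le> erc_const" unfolding erc_const_def by (rule Max_ge[OF fin]) simp
  show "j < p \<Longrightarrow> j \<notin> I \<Longrightarrow> l1_norm (pinv (col_sub X (sorted_list_of_set I)) *\<^sub>v col X j) \<le> erc_const"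
    unfolding erc_const_def by (rule Max_ge[OF fin]) simp
  have "erc_const \<in> ?S" unfolding erc_const_def by (rule Max_in[OF fin]) simp
  thus "erc_const < 1" using ERC by auto
qed

lemma noise_radius_pos: "noise_radius > 0"
  unfolding noise_radius_def using erc_const_less_1 min_max_corr_pos by simp

lemma corr_outside_support_le:
  assumes J: "J \<in> partial_supports" and j: "j < p" "j \<notin> I"
  shows "\<bar>col X j \<bullet> clean_resid J\<bar> \<le> erc_const * max_corr J"
proof -
  obtain a where a: "a \<in> carrier_vec (length (sorted_list_of_set I))"
    "clean_resid J = col_sub X (sorted_list_of_set I) *\<^sub>v a"
    using in_col_span_imp_col_sub_mult_vec[OF supp_list(2)] clean_resid_in_span[OF J]
      clean_resid_carrier supp_list(1) by (metis dims(1))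
  have "\<bar>col X j \<bullet> clean_resid J\<bar> \<le> l1_norm (pinv (col_sub X (sorted_list_of_set I)) *\<^sub>v col X j) * max_corr J"
    using erc_correlation_bound[OF ERC_rank a(1), of "col X j"] col_carrier a(2) supp_list(1)
    unfolding max_corr_def by simp
  also have "\<dots> \<le> erc_const * max_corr J"
    using erc_const_ge[OF j] max_corr_pos[OF J] by (intro mult_right_mono) auto
  finally show ?thesis .
qed

lemma corr_noise_perturbation:
  assumes J: "J \<in> partial_supports" and e: "e \<in> carrier_vec n" and x: "x < p"
  shows "\<bar>col X x \<bullet> omp_resid X (signal + e) J - col X x \<bullet> clean_resid J\<bar> \<le> sqrt (sq_norm e)"
proof -
  let ?re = "omp_resid X e J"
  have re: "?re \<in> carrier_vec n" using omp_resid_carrier[of e X J] e by simp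
  have "omp_resid X (signal + e) J = clean_resid J + ?re"
    unfolding clean_resid_def using omp_resid_add signal_carrier e by simp
  hence "\<bar>col X x \<bullet> omp_resid X (signal + e) J - col X x \<bullet> clean_resid J\<bar> = \<bar>col X x \<bullet> ?re\<bar>"
    using scalar_prod_add_distrib[OF col_carrier clean_resid_carrier re] by simp
  also have "\<dots> \<le> sqrt (sq_norm (col X x)) * sqrt (sq_norm ?re)" by (rule abs_scalar_prod_le[OF col_carrier re])
  also have "\<dots> = sqrt (sq_norm ?re)" using unit_cols x by simp
  also have "\<dots> \<le> sqrt (sq_norm e)" using sq_norm_omp_resid_le[OF proj_regular_partial[OF J]] e by simp
  finally show ?thesis .
qed

text \<open>One OMP step with noise below \<open>noise_radius\<close>: the best column inside \<open>I\<close> keeps correlation at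
  least \<open>max_corr J - \<parallel>e\<parallel>\<close>, while by the ERC a column outside \<open>I\<close> has at most
  \<open>erc_const * max_corr J + \<parallel>e\<parallel>\<close>, and already selected columns have correlation \<open>0\<close>.\<close>

lemma omp_select_new_support_index:
  assumes e: "e \<in> carrier_vec n" and small: "sqrt (sq_norm e) < noise_radius" and J: "J \<in> partial_supports"
  shows "omp_select X (omp_resid X (signal + e) J) \<in> I - set J"
proof -
  let ?R = "omp_resid X (signal + e) J" and ?ne = "sqrt (sq_norm e)"
  let ?t = "omp_select X ?R"
  have p: "0 < p" using I_subset I_nonempty by auto
  have sel: "?t < p" "\<forall>s<p. \<bar>col X s \<bullet> ?R\<bar> \<le> \<bar>col X ?t \<bullet> ?R\<bar>"
    using omp_select_maximal[of X ?R] p by auto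
  have "max_corr J \<in> (\<lambda>i. \<bar>col X i \<bullet> clean_resid J\<bar>) ` I"
    unfolding max_corr_def using finite_I I_nonempty by (intro Max_in) auto
  then obtain i0 where i0: "i0 \<in> I" "\<bar>col X i0 \<bullet> clean_resid J\<bar> = max_corr J" by auto
  have "i0 < p" using i0 I_subset by auto
  hence big: "max_corr J - ?ne \<le> \<bar>col X ?t \<bullet> ?R\<bar>"
    using corr_noise_perturbation[OF J e] i0(2) sel(2) by (smt (verit))
  have "(1 - erc_const) * min_max_corr \<le> (1 - erc_const) * max_corr J"
    using min_max_corr_le[OF J] erc_const_less_1 by (intro mult_left_mono) auto
  hence gap: "2 * ?ne < max_corr J - erc_const * max_corr J"
    using small unfolding noise_radius_def by (simp add: algebra_simps)
  have "?t \<in> I"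
  proof (rule ccontr)
    assume "?t \<notin> I"
    hence "\<bar>col X ?t \<bullet> ?R\<bar> \<le> erc_const * max_corr J + ?ne"
      using corr_outside_support_le[OF J sel(1)] corr_noise_perturbation[OF J e sel(1)] by linarith
    thus False using big gap by linarith
  qed
  moreover have "?t \<notin> set J"
  proof
    assume "?t \<in> set J"
    hence "col X ?t \<bullet> ?R = 0"
      using omp_resid_orthogonal[OF proj_regular_partial[OF J]] signal_carrier e by simp
    thus False using big gap erc_const_nonneg max_corr_pos[OF J] sq_norm_nonneg[of e]
      by (smt (verit) mult_nonneg_nonneg real_sqrt_ge_zero)
  qed
  ultimately show ?thesis by simp
qed

lemma omp_idx_within_support:
  assumes e: "e \<in> carrier_vec n" and small: "sqrt (sq_norm e) < noise_radius" and k: "k \<le> k0"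
  shows "distinct (omp_idx e k) \<and> set (omp_idx e k) \<subseteq> I"
  using k
proof (induction k)
  case (Suc k)
  hence IH: "distinct (omp_idx e k)" "set (omp_idx e k) \<subseteq> I" by auto
  hence "set (omp_idx e k) \<noteq> I" using Suc.prems card_I distinct_card[OF IH(1)] by auto
  hence "omp_idx e k \<in> partial_supports" unfolding partial_supports_def using IH by auto
  thus ?case using IH omp_select_new_support_index[OF e small] by (simp add: Let_def)
qed simp

lemma omp_idx_partial:
  assumes e: "e \<in> carrier_vec n" and small: "sqrt (sq_norm e) < noise_radius" and k: "k < k0"
  shows "omp_idx e k \<in> partial_supports"
proof -
  have "distinct (omp_idx e k)" "set (omp_idx e k) \<subseteq> I" using omp_idx_within_support[OF e small] k by auto
  moreover from this have "set (omp_idx e k) \<noteq> I" using k card_I distinct_card by fastforce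
  ultimately show ?thesis unfolding partial_supports_def by auto
qed

lemma omp_idx_recovers:
  assumes e: "e \<in> carrier_vec n" and small: "sqrt (sq_norm e) < noise_radius"
  shows "distinct (omp_idx e k0)" "set (omp_idx e k0) = I"
  using omp_idx_within_support[OF e small order_refl] card_I distinct_card[of "omp_idx e k0"]
    card_subset_eq[OF finite_I] by auto

text \<open>For noise energy below \<open>noise_level\<close>, OMP recovers \<open>I\<close> in its first \<open>k\<^sub>0\<close> steps, the ratios \<open>t(k)\<close>
  with \<open>k < k\<^sub>0\<close> stay above \<open>ratio_floor\<close>, and \<open>t(k\<^sub>0) \<le> 4 \<parallel>e\<parallel>\<^sup>2 / min_clean_resid < ratio_floor\<close>.\<close>

definition ratio_floor :: real where
  "ratio_floor = (min_clean_resid / 4) / (sqrt (sq_norm signal) + sqrt min_clean_resid / 2)\<^sup>2"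

definition noise_level :: real where
  "noise_level = min (noise_radius\<^sup>2) (min (min_clean_resid / 4) (ratio_floor * min_clean_resid / 4))"

lemma ratio_floor_pos: "ratio_floor > 0"
proof -
  have "sqrt (sq_norm signal) + sqrt min_clean_resid / 2 > 0"
    using min_clean_resid_pos sq_norm_nonneg[of signal] by (simp add: add_nonneg_pos)
  thus ?thesis unfolding ratio_floor_def using min_clean_resid_pos by simp
qed

lemma noise_level_pos: "noise_level > 0"
  unfolding noise_level_def using noise_radius_pos min_clean_resid_pos ratio_floor_pos by simp

lemma below_noise_level:
  assumes "sq_norm e < noise_level"
  shows "sqrt (sq_norm e) < noise_radius" "sqrt (sq_norm e) < sqrt min_clean_resid / 2"
    "4 * sq_norm e / min_clean_resid < ratio_floor"
proof -
  have "sq_norm e < noise_radius\<^sup>2" using assms unfolding noise_level_def by simp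
  thus "sqrt (sq_norm e) < noise_radius" using noise_radius_pos real_sqrt_less_iff[of _ "noise_radius\<^sup>2"] by simp
  have "sq_norm e < (sqrt min_clean_resid / 2)\<^sup>2"
    using assms min_clean_resid_pos unfolding noise_level_def by (simp add: power_divide)
  thus "sqrt (sq_norm e) < sqrt min_clean_resid / 2"
    using min_clean_resid_pos by (intro real_less_lsqrt) simp_all
  have "sq_norm e < ratio_floor * min_clean_resid / 4" using assms unfolding noise_level_def by simp
  thus "4 * sq_norm e / min_clean_resid < ratio_floor" using min_clean_resid_pos by (simp add: field_simps)
qed

lemma sq_norm_noisy_resid_ge:
  assumes e: "e \<in> carrier_vec n" and small: "sqrt (sq_norm e) \<le> sqrt min_clean_resid / 2"
    and J: "J \<in> partial_supports"
  shows "min_clean_resid / 4 \<le> sq_norm (omp_resid X (signal + e) J)"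
proof -
  let ?re = "omp_resid X e J"
  have re: "?re \<in> carrier_vec n" using omp_resid_carrier[of e X J] e by simp
  have R: "omp_resid X (signal + e) J = clean_resid J + ?re"
    unfolding clean_resid_def using omp_resid_add signal_carrier e by simp
  have "sqrt min_clean_resid \<le> sqrt (sq_norm (clean_resid J))" using min_clean_resid_le[OF J] by simp
  moreover have "sqrt (sq_norm ?re) \<le> sqrt (sq_norm e)"
    using sq_norm_omp_resid_le[OF proj_regular_partial[OF J]] e by simp
  ultimately have "sqrt min_clean_resid / 2 \<le> sqrt (sq_norm (omp_resid X (signal + e) J))"
    unfolding R using sqrt_sq_norm_add_ge[OF clean_resid_carrier[of J] re] small by linarith
  hence "(sqrt min_clean_resid / 2)\<^sup>2 \<le> sq_norm (omp_resid X (signal + e) J)"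
    using min_clean_resid_pos by (intro sqrt_ge_absD) simp
  thus ?thesis using min_clean_resid_pos by (simp add: power_divide)
qed

lemma tf_ratio_before_recovery_ge:
  assumes e: "e \<in> carrier_vec n" and small: "sq_norm e < noise_level" and k: "1 \<le> k" "k < k0"
  shows "ratio_floor \<le> tf_ratio X (signal + e) k"
proof -
  note bounds = below_noise_level[OF small]
  have J: "omp_idx e k \<in> partial_supports" "omp_idx e (k - 1) \<in> partial_supports"
    using omp_idx_partial[OF e bounds(1)] k by auto
  let ?num = "sq_norm (omp_res X (signal + e) k)" and ?den = "sq_norm (omp_res X (signal + e) (k - 1))"
  have num: "min_clean_resid / 4 \<le> ?num" and den_ge: "min_clean_resid / 4 \<le> ?den"
    unfolding omp_res_def using sq_norm_noisy_resid_ge[OF e _ J(1)] sq_norm_noisy_resid_ge[OF e _ J(2)] bounds(2)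
    by auto
  have "?den \<le> sq_norm (signal + e)"
    unfolding omp_res_def using sq_norm_omp_resid_le[OF proj_regular_partial[OF J(2)]] signal_carrier e by simp
  moreover have "sqrt (sq_norm (signal + e)) \<le> sqrt (sq_norm signal) + sqrt min_clean_resid / 2"
    using sqrt_sq_norm_add_le[OF signal_carrier e] bounds(2) by linarith
  ultimately have den_le: "?den \<le> (sqrt (sq_norm signal) + sqrt min_clean_resid / 2)\<^sup>2"
    using sqrt_le_D by fastforce
  have "ratio_floor \<le> ?num / ?den"
    unfolding ratio_floor_def by (rule frac_le) (use num den_le den_ge min_clean_resid_pos in auto)
  thus ?thesis unfolding tf_ratio_def .
qed

lemma tf_ratio_at_recovery_le:
  assumes e: "e \<in> carrier_vec n" and small: "sq_norm e < noise_level"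
  shows "tf_ratio X (signal + e) k0 \<le> 4 * sq_norm e / min_clean_resid"
proof -
  note bounds = below_noise_level[OF small]
  have J: "omp_idx e (k0 - 1) \<in> partial_supports" using omp_idx_partial[OF e bounds(1)] k0_pos by simp
  have reg: "proj_regular X (omp_idx e k0)"
    using proj_regular_if_subset omp_idx_recovers[OF e bounds(1)] by simp
  have "omp_resid X signal (omp_idx e k0) = 0\<^sub>v n"
    using omp_resid_in_span_eq_0[OF reg] signal_carrier signal_in_span omp_idx_recovers[OF e bounds(1)] by simp
  hence "omp_res X (signal + e) k0 = omp_resid X e (omp_idx e k0)"
    unfolding omp_res_def using omp_resid_add[of signal X e] signal_carrier e omp_resid_carrier[of e X] by simp
  hence num: "sq_norm (omp_res X (signal + e) k0) \<le> sq_norm e"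
    using sq_norm_omp_resid_le[OF reg] e by simp
  have den: "min_clean_resid / 4 \<le> sq_norm (omp_res X (signal + e) (k0 - 1))"
    unfolding omp_res_def using sq_norm_noisy_resid_ge[OF e _ J] bounds(2) by simp
  have "tf_ratio X (signal + e) k0 \<le> sq_norm e / (min_clean_resid / 4)"
    unfolding tf_ratio_def by (rule frac_le) (use num den min_clean_resid_pos sq_norm_nonneg in auto)
  thus ?thesis by (simp add: mult.commute)
qed

lemma tf_omp_fails_imp_late_small_ratio:
  assumes e: "e \<in> carrier_vec n" and small: "sq_norm e < noise_level" and kmax: "k0 < kmax"
    and fails: "tf_omp_fails X (signal + e) kmax I"
  shows "\<exists>k. k0 < k \<and> k \<le> kmax - 1 \<and> tf_ratio X (signal + e) k \<le> 4 * sq_norm e / min_clean_resid"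
proof -
  obtain k where ks: "tf_kstar X (signal + e) kmax k" and est: "tf_omp_est X (signal + e) kmax k \<noteq> I"
    using fails unfolding tf_omp_fails_def by blast
  have k: "1 \<le> k" "k \<le> kmax - 1"
    and kmin: "\<forall>k'\<in>{1..kmax - 1}. tf_ratio X (signal + e) k \<le> tf_ratio X (signal + e) k'"
    using ks unfolding tf_kstar_def by auto
  have "k \<noteq> k0"
    using est omp_idx_recovers[OF e below_noise_level(1)[OF small]] take_omp_indices[of k kmax] k
    unfolding tf_omp_est_def by auto
  moreover have le: "tf_ratio X (signal + e) k \<le> 4 * sq_norm e / min_clean_resid"
    using kmin k0_pos kmax tf_ratio_at_recovery_le[OF e small] by force
  moreover have "\<not> k < k0"
    using tf_ratio_before_recovery_ge[OF e small k(1)] le below_noise_level(3)[OF small] by force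
  ultimately show ?thesis using k by (intro exI[of _ k]) auto
qed

section \<open>Scale invariance after recovery\<close>

text \<open>Once \<open>I\<close> is selected, \<open>X \<beta>\<close> is projected away and every residual is linear in the noise, so
  multiplying the noise by \<open>c > 0\<close> multiplies the residuals by \<open>c\<close> and leaves the later selections
  and the ratios \<open>t(k)\<close>, \<open>k > k\<^sub>0\<close>, unchanged.\<close>

lemma omp_resid_smult_noise:
  assumes e: "e \<in> carrier_vec n"
    and reg1: "proj_regular X js1" and reg2: "proj_regular X js2" and S: "set js1 = set js2" and IS: "I \<subseteq> set js1"
  shows "omp_resid X (signal + c \<cdot>\<^sub>v e) js2 = c \<cdot>\<^sub>v omp_resid X (signal + e) js1"
proof -
  have span: "in_col_span X (set js1) signal" using in_col_span_subset[OF signal_in_span IS] by simp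
  have z1: "omp_resid X signal js1 = 0\<^sub>v n" using omp_resid_in_span_eq_0[OF reg1 _ span] signal_carrier by simp
  have z2: "omp_resid X signal js2 = 0\<^sub>v n" using omp_resid_in_span_eq_0[OF reg2 _] span S signal_carrier by simp
  have r1: "omp_resid X e js1 \<in> carrier_vec n" and r2: "omp_resid X (c \<cdot>\<^sub>v e) js2 \<in> carrier_vec n"
    using omp_resid_carrier[of e X] omp_resid_carrier[of "c \<cdot>\<^sub>v e" X] e by auto
  have "omp_resid X (signal + c \<cdot>\<^sub>v e) js2 = omp_resid X (c \<cdot>\<^sub>v e) js2"
    using omp_resid_add[of signal X "c \<cdot>\<^sub>v e"] signal_carrier e z2 r2 by simp
  also have "\<dots> = c \<cdot>\<^sub>v omp_resid X e js1"
    using omp_resid_smult[of e X c js2] omp_resid_set_cong[OF reg2 reg1 S[symmetric], of e] e by simp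
  also have "omp_resid X e js1 = omp_resid X (signal + e) js1"
    using omp_resid_add[of signal X e] signal_carrier e z1 r1 by simp
  finally show ?thesis .
qed

lemma omp_iterates_smult_noise:
  assumes e: "e \<in> carrier_vec n" and c: "c > 0"
    and small: "sqrt (sq_norm e) < noise_radius" "sqrt (sq_norm (c \<cdot>\<^sub>v e)) < noise_radius"
    and rank: "\<forall>k\<in>{1..kmax}. full_col_rank (col_sub X (omp_idx e k))"
    and k: "k0 \<le> k" "k \<le> kmax"
  shows "drop k0 (omp_idx (c \<cdot>\<^sub>v e) k) = drop k0 (omp_idx e k)
    \<and> full_col_rank (col_sub X (omp_idx (c \<cdot>\<^sub>v e) k))
    \<and> omp_res X (signal + c \<cdot>\<^sub>v e) k = c \<cdot>\<^sub>v omp_res X (signal + e) k"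
  using k
proof (induction k rule: dec_induct)
  case base
  have ce: "c \<cdot>\<^sub>v e \<in> carrier_vec n" using e by simp
  note rec1 = omp_idx_recovers[OF e small(1)] and rec2 = omp_idx_recovers[OF ce small(2)]
  have "omp_idx (c \<cdot>\<^sub>v e) k0 \<noteq> []" using k0_pos by (metis length_omp_indices list.size(3) not_one_le_zero)
  hence "full_col_rank (col_sub X (omp_idx (c \<cdot>\<^sub>v e) k0))"
    using proj_regular_if_subset[of "omp_idx (c \<cdot>\<^sub>v e) k0"] rec2 unfolding proj_regular_def by simp
  moreover have "omp_res X (signal + c \<cdot>\<^sub>v e) k0 = c \<cdot>\<^sub>v omp_res X (signal + e) k0"
    unfolding omp_res_def using rec1 rec2
    by (intro omp_resid_smult_noise[OF e proj_regular_if_subset proj_regular_if_subset]) auto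
  ultimately show ?case by simp
next
  case (step k)
  note IH = step.IH[OF Suc_leD[OF step.prems]]
  let ?L1 = "omp_idx e (Suc k)" and ?L2 = "omp_idx (c \<cdot>\<^sub>v e) (Suc k)"
  have ce: "c \<cdot>\<^sub>v e \<in> carrier_vec n" using e by simp
  have "omp_select X (omp_res X (signal + c \<cdot>\<^sub>v e) k) = omp_select X (omp_res X (signal + e) k)"
    using IH omp_select_smult[OF c] omp_resid_carrier[of "signal + e" X] signal_carrier e
    unfolding omp_res_def by simp
  hence drop_eq: "drop k0 ?L2 = drop k0 ?L1"
    using IH step.hyps by (simp del: omp_indices.simps(2) add: omp_indices_Suc)
  have take_eq: "set (take k0 (omp_idx e' (Suc k))) = I"
    if "e' \<in> carrier_vec n" "sqrt (sq_norm e') < noise_radius" for e'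
    using take_omp_indices[of k0 "Suc k"] omp_idx_recovers[OF that] step.hyps by simp
  have S: "set ?L2 = set ?L1"
    using take_eq[OF ce small(2)] take_eq[OF e small(1)] drop_eq
    by (metis append_take_drop_id set_append)
  have "Suc k \<in> {1..kmax}" using step.prems by simp
  hence fr1: "full_col_rank (col_sub X ?L1)" using rank by blast
  hence fr2: "full_col_rank (col_sub X ?L2)"
    by (rule full_col_rank_col_sub_set_cong[OF _ S]) (simp only: length_omp_indices)
  have "I \<subseteq> set ?L1" using take_eq[OF e small(1)] by (metis set_take_subset)
  hence "omp_res X (signal + c \<cdot>\<^sub>v e) (Suc k) = c \<cdot>\<^sub>v omp_res X (signal + e) (Suc k)"
    unfolding omp_res_def using fr1 fr2 S unfolding proj_regular_def
    by (intro omp_resid_smult_noise[OF e]) (auto simp: proj_regular_def)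
  thus ?case using drop_eq fr2 by simp
qed

lemma tf_ratio_smult_noise:
  assumes e: "e \<in> carrier_vec n" and c: "c > 0"
    and small: "sqrt (sq_norm e) < noise_radius" "sqrt (sq_norm (c \<cdot>\<^sub>v e)) < noise_radius"
    and rank: "\<forall>k\<in>{1..kmax}. full_col_rank (col_sub X (omp_idx e k))"
    and k: "k0 < k" "k \<le> kmax"
  shows "tf_ratio X (signal + c \<cdot>\<^sub>v e) k = tf_ratio X (signal + e) k"
proof -
  have "omp_res X (signal + c \<cdot>\<^sub>v e) k = c \<cdot>\<^sub>v omp_res X (signal + e) k"
    and "omp_res X (signal + c \<cdot>\<^sub>v e) (k - 1) = c \<cdot>\<^sub>v omp_res X (signal + e) (k - 1)"
    using omp_iterates_smult_noise[OF e c small rank] k by auto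
  thus ?thesis unfolding tf_ratio_def using c by (simp only: sq_norm_smult) simp
qed

end

section \<open>Measurability and Gaussian noise\<close>

locale omp_measurable =
  fixes M :: "'w measure" and X :: "real mat" and Y :: "'w \<Rightarrow> real Matrix.vec"
  assumes Y_carrier: "\<And>w. Y w \<in> carrier_vec (dim_row X)"
    and Y_measurable: "\<And>i. i < dim_row X \<Longrightarrow> (\<lambda>w. Y w $ i) \<in> borel_measurable M"
begin

lemma borel_measurable_omp_resid_nth:
  assumes i: "i < dim_row X"
  shows "(\<lambda>w. omp_resid X (Y w) js $ i) \<in> borel_measurable M"
proof -
  have "(\<lambda>w. omp_resid X (Y w) js $ i) =
    (\<lambda>w. if js = [] then Y w $ i else Y w $ i - (\<Sum>j<dim_row X. proj X js $$ (i, j) * Y w $ j))"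
    using omp_resid_nth[OF Y_carrier i] by (intro ext) simp
  also have "\<dots> \<in> borel_measurable M"
    using Y_measurable i by (cases "js = []") (simp_all add: borel_measurable_sum)
  finally show ?thesis .
qed

lemma borel_measurable_corr:
  "(\<lambda>w. col X s \<bullet> omp_resid X (Y w) js) \<in> borel_measurable M"
proof -
  have "(\<lambda>w. col X s \<bullet> omp_resid X (Y w) js) = (\<lambda>w. \<Sum>i<dim_row X. X $$ (i, s) * omp_resid X (Y w) js $ i)"
    using scalar_prod_col omp_resid_carrier[OF Y_carrier] by blast
  also have "\<dots> \<in> borel_measurable M"
    by (intro borel_measurable_sum borel_measurable_times measurable_const borel_measurable_omp_resid_nth) auto
  finally show ?thesis .
qed

lemma borel_measurable_sq_norm_omp_resid:
  "(\<lambda>w. sq_norm (omp_resid X (Y w) js)) \<in> borel_measurable M"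
proof -
  have "(\<lambda>w. sq_norm (omp_resid X (Y w) js)) =
    (\<lambda>w. \<Sum>i<dim_row X. omp_resid X (Y w) js $ i * omp_resid X (Y w) js $ i)"
    unfolding sq_norm_def scalar_prod_def
    by (intro ext) (simp add: atLeast0LessThan carrier_vecD[OF omp_resid_carrier[OF Y_carrier]])
  also have "\<dots> \<in> borel_measurable M"
    by (intro borel_measurable_sum borel_measurable_times borel_measurable_omp_resid_nth) auto
  finally show ?thesis .
qed

lemma measurable_omp_select:
  "(\<lambda>w. omp_select X (omp_resid X (Y w) js)) \<in> measurable M (count_space UNIV)"
  unfolding omp_select_def
proof (rule measurable_Least)
  fix t
  have [measurable]: "\<And>s. (\<lambda>w. col X s \<bullet> omp_resid X (Y w) js) \<in> borel_measurable M"
    by (rule borel_measurable_corr)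
  show "Measurable.pred M (\<lambda>w. t < dim_col X \<and>
      (\<forall>s<dim_col X. \<bar>col X s \<bullet> omp_resid X (Y w) js\<bar> \<le> \<bar>col X t \<bullet> omp_resid X (Y w) js\<bar>))"
    by measurable
qed

text \<open>The index lists range over a countable type, so measurability propagates through the recursion.\<close>

lemma measurable_omp_indices: "(\<lambda>w. omp_indices X (Y w) k) \<in> measurable M (count_space UNIV)"
proof (induction k)
  case (Suc k)
  have "(\<lambda>w. omp_indices X (Y w) (Suc k)) =
     (\<lambda>w. (\<lambda>js w. js @ [omp_select X (omp_resid X (Y w) js)]) (omp_indices X (Y w) k) w)"
    by (simp add: Let_def)
  also have "\<dots> \<in> measurable M (count_space UNIV)"
  proof (rule measurable_compose_countable[OF _ Suc.IH])
    fix js :: "nat list"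
    show "(\<lambda>w. js @ [omp_select X (omp_resid X (Y w) js)]) \<in> measurable M (count_space UNIV)"
      using measurable_compose[OF measurable_omp_select[of js], of "\<lambda>t. js @ [t]" "count_space UNIV"]
      by (simp add: measurable_count_space_eq1)
  qed
  finally show ?case .
qed simp

lemma borel_measurable_tf_ratio: "(\<lambda>w. tf_ratio X (Y w) k) \<in> borel_measurable M"
proof -
  have "(\<lambda>w. sq_norm (omp_res X (Y w) m)) \<in> borel_measurable M" for m
    unfolding omp_res_def
    by (rule measurable_compose_countable[OF borel_measurable_sq_norm_omp_resid measurable_omp_indices])
  thus ?thesis unfolding tf_ratio_def by (intro borel_measurable_divide)
qed

end

lemma prob_space_gauss_noise: "s > 0 \<Longrightarrow> prob_space (gauss_noise n s)"
  unfolding gauss_noise_def by (rule prob_space_PiM) (rule prob_space_normal_density, simp)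

lemma sets_gauss_noise: "sets (gauss_noise n s) = sets (Pi\<^sub>M {..<n} (\<lambda>_. borel :: real measure))"
  unfolding gauss_noise_def by (rule sets_PiM_cong) auto

lemma borel_measurable_gauss_noise_vec_nth:
  assumes i: "i < n" shows "(\<lambda>w. Matrix.vec n w $ i) \<in> borel_measurable (gauss_noise n s)"
proof -
  have "(\<lambda>w. w i) \<in> measurable (gauss_noise n s) (density lborel (\<lambda>x. ennreal (normal_density 0 (sqrt s) x)))"
    unfolding gauss_noise_def using measurable_component_singleton[of i "{..<n}"] i by simp
  moreover have "measurable (gauss_noise n s) (density lborel (\<lambda>x. ennreal (normal_density 0 (sqrt s) x)))
     = measurable (gauss_noise n s) borel" by (rule measurable_cong_sets) auto
  ultimately show ?thesis using i by simp
qed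

lemma distr_normal_density_scale:
  assumes s: "s > 0"
  shows "distr (density lborel (\<lambda>x. ennreal (normal_density 0 1 x)))
               (density lborel (\<lambda>x. ennreal (normal_density 0 (sqrt s) x))) (\<lambda>x. sqrt s * x)
       = density lborel (\<lambda>x. ennreal (normal_density 0 (sqrt s) x))"
proof -
  let ?N1 = "density lborel (\<lambda>x. ennreal (normal_density 0 1 x))"
  have P: "prob_space ?N1" by (rule prob_space_normal_density) simp
  have "distributed ?N1 lborel (\<lambda>x. x) (\<lambda>x. ennreal (normal_density 0 1 x))"
    unfolding distributed_def by (auto simp: distr_id2 measurable_ident_sets)
  hence "distributed ?N1 lborel (\<lambda>x. 0 + sqrt s * x) (\<lambda>x. ennreal (normal_density (0 + sqrt s * 0) (\<bar>sqrt s\<bar> * 1) x))"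
    by (rule prob_space.normal_density_affine[OF P]) (use s in auto)
  hence "distr ?N1 lborel (\<lambda>x. sqrt s * x) = density lborel (\<lambda>x. ennreal (normal_density 0 (sqrt s) x))"
    unfolding distributed_def using s by simp
  moreover have "distr ?N1 (density lborel (\<lambda>x. ennreal (normal_density 0 (sqrt s) x))) (\<lambda>x. sqrt s * x)
     = distr ?N1 lborel (\<lambda>x. sqrt s * x)" by (rule distr_cong) auto
  ultimately show ?thesis by simp
qed

lemma gauss_noise_scale:
  assumes s: "s > 0"
  shows "gauss_noise n s = distr (gauss_noise n 1) (gauss_noise n s) (\<lambda>z. \<lambda>i\<in>{..<n}. sqrt s * z i)"
proof -
  let ?N1 = "density lborel (\<lambda>x. ennreal (normal_density 0 1 x))"
  let ?Ns = "density lborel (\<lambda>x. ennreal (normal_density 0 (sqrt s) x))"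
  have "?N1 \<rightarrow>\<^sub>M ?Ns = borel \<rightarrow>\<^sub>M borel" by (rule measurable_cong_sets) auto
  hence f: "(\<lambda>x. sqrt s * x) \<in> ?N1 \<rightarrow>\<^sub>M ?Ns" by simp
  have "distr (Pi\<^sub>M {..<n} (\<lambda>_. ?N1)) (Pi\<^sub>M {..<n} (\<lambda>_. ?Ns)) (compose {..<n} (\<lambda>x. sqrt s * x))
      = Pi\<^sub>M {..<n} (\<lambda>i. distr ?N1 ?Ns (\<lambda>x. sqrt s * x))"
    by (rule distr_PiM_finite_prob_space') (use f s in \<open>auto intro: prob_space_normal_density\<close>)
  also have "\<dots> = gauss_noise n s" unfolding distr_normal_density_scale[OF s] gauss_noise_def ..
  finally show ?thesis unfolding gauss_noise_def compose_def by simp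
qed

lemma measurable_gauss_noise_scale:
  "(\<lambda>z. \<lambda>i\<in>{..<n}. sqrt s * z i) \<in> gauss_noise n 1 \<rightarrow>\<^sub>M gauss_noise n s"
proof -
  have "gauss_noise n 1 \<rightarrow>\<^sub>M gauss_noise n s = Pi\<^sub>M {..<n} (\<lambda>_. borel :: real measure) \<rightarrow>\<^sub>M Pi\<^sub>M {..<n} (\<lambda>_. borel)"
    by (rule measurable_cong_sets) (simp_all add: sets_gauss_noise)
  moreover have "(\<lambda>z. \<lambda>i\<in>{..<n}. sqrt s * z i) \<in> Pi\<^sub>M {..<n} (\<lambda>_. borel :: real measure) \<rightarrow>\<^sub>M Pi\<^sub>M {..<n} (\<lambda>_. borel)"
    by (rule measurable_restrict) measurable
  ultimately show ?thesis by simp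
qed

section \<open>High-SNR consistency\<close>

locale tf_omp_model = erc_model +
  fixes kmax :: nat
  assumes kmax: "kmax > k0"
    and standing: "\<forall>s>0. AE w in gauss_noise n s. omp_valid X (X *\<^sub>v \<beta> + Matrix.vec n w) kmax"
begin

definition scale_noise :: "real \<Rightarrow> (nat \<Rightarrow> real) \<Rightarrow> nat \<Rightarrow> real" where
  "scale_noise s z = (\<lambda>i\<in>{..<n}. sqrt s * z i)"

definition noise_energy :: "(nat \<Rightarrow> real) \<Rightarrow> real" where
  "noise_energy z = sq_norm (Matrix.vec n z)"

definition valid_noise :: "(nat \<Rightarrow> real) \<Rightarrow> bool" where
  "valid_noise w \<longleftrightarrow> omp_valid X (signal + Matrix.vec n w) kmax"

text \<open>Shrinking a standard Gaussian sample \<open>z\<close> below \<open>noise_level\<close> gives ratios \<open>t(k)\<close> that do not depend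
  on \<open>\<sigma>\<close>; by scale invariance they agree for \<open>k > k\<^sub>0\<close> with those of the noise \<open>\<sigma> z\<close> as soon as
  \<open>\<sigma> z\<close> is itself below \<open>noise_level\<close>.\<close>

definition shrink :: "(nat \<Rightarrow> real) \<Rightarrow> real" where
  "shrink z = sqrt noise_level / (2 * (1 + noise_energy z))"

definition shrunk_ratio :: "nat \<Rightarrow> (nat \<Rightarrow> real) \<Rightarrow> real" where
  "shrunk_ratio k z = tf_ratio X (signal + Matrix.vec n (\<lambda>i. shrink z * z i)) k"

definition energy_tail :: "real \<Rightarrow> real" where
  "energy_tail R = measure (gauss_noise n 1) {z \<in> space (gauss_noise n 1). R \<le> noise_energy z}"

definition shrunk_ratio_cdf :: "nat \<Rightarrow> real \<Rightarrow> real" where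
  "shrunk_ratio_cdf k x = measure (gauss_noise n 1) {z \<in> space (gauss_noise n 1). shrunk_ratio k z \<le> x}"

lemma vec_scale_noise: "Matrix.vec n (scale_noise s z) = sqrt s \<cdot>\<^sub>v Matrix.vec n z"
  unfolding scale_noise_def by (intro eq_vecI) auto

lemma noise_energy_nonneg: "0 \<le> noise_energy z"
  unfolding noise_energy_def by (rule sq_norm_nonneg)

lemma sq_norm_scale_noise: "s \<ge> 0 \<Longrightarrow> sq_norm (Matrix.vec n (scale_noise s z)) = s * noise_energy z"
  unfolding vec_scale_noise sq_norm_smult noise_energy_def by simp

lemma vec_shrink: "Matrix.vec n (\<lambda>i. shrink z * z i) = shrink z \<cdot>\<^sub>v Matrix.vec n z"
  by (intro eq_vecI) auto

lemma shrink_pos: "shrink z > 0"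
  unfolding shrink_def using noise_level_pos noise_energy_nonneg[of z] by (simp add: add_pos_nonneg)

lemma sq_norm_shrunk_below_noise_level: "sq_norm (shrink z \<cdot>\<^sub>v Matrix.vec n z) < noise_level"
proof -
  let ?a = "noise_energy z"
  have a: "0 \<le> ?a" by (rule noise_energy_nonneg)
  have "sq_norm (shrink z \<cdot>\<^sub>v Matrix.vec n z) = noise_level * (?a / (4 * (1 + ?a)\<^sup>2))"
    unfolding sq_norm_smult noise_energy_def[symmetric] shrink_def using noise_level_pos
    by (simp add: power_divide power_mult_distrib) (simp add: power2_eq_square algebra_simps)
  also have "\<dots> < noise_level * 1"
  proof (rule mult_strict_left_mono)
    have "?a < 4 * (1 + ?a)\<^sup>2" using a by (simp add: power2_eq_square algebra_simps) (smt (verit) mult_nonneg_nonneg)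
    thus "?a / (4 * (1 + ?a)\<^sup>2) < 1" using a by simp
  qed (rule noise_level_pos)
  finally show ?thesis by simp
qed

lemma borel_measurable_noise_energy: "noise_energy \<in> borel_measurable (gauss_noise n s)"
proof -
  have "noise_energy = (\<lambda>w. \<Sum>i<n. Matrix.vec n w $ i * Matrix.vec n w $ i)"
    unfolding noise_energy_def sq_norm_def scalar_prod_def by (intro ext) (simp add: atLeast0LessThan)
  also have "\<dots> \<in> borel_measurable (gauss_noise n s)"
    by (intro borel_measurable_sum borel_measurable_times borel_measurable_gauss_noise_vec_nth) auto
  finally show ?thesis .
qed

lemma borel_measurable_shrunk_ratio: "shrunk_ratio k \<in> borel_measurable (gauss_noise n s)"
proof -
  interpret omp_measurable "gauss_noise n s" X "\<lambda>w. signal + Matrix.vec n (\<lambda>i. shrink w * w i)"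
  proof
    fix i assume i: "i < dim_row X"
    have "(\<lambda>w. (signal + Matrix.vec n (\<lambda>i. shrink w * w i)) $ i) =
      (\<lambda>w. signal $ i + sqrt noise_level / (2 * (1 + noise_energy w)) * Matrix.vec n w $ i)"
      using i signal_carrier unfolding shrink_def by (intro ext) simp
    also have "\<dots> \<in> borel_measurable (gauss_noise n s)"
      using borel_measurable_noise_energy borel_measurable_gauss_noise_vec_nth[of i] i by simp measurable
    finally show "(\<lambda>w. (signal + Matrix.vec n (\<lambda>i. shrink w * w i)) $ i) \<in> borel_measurable (gauss_noise n s)" .
  qed (use signal_carrier in simp)
  show ?thesis using borel_measurable_tf_ratio unfolding shrunk_ratio_def[abs_def] .
qed

lemma valid_scaled_noise_AE:
  assumes s: "s > 0"
  obtains N where "N \<in> sets (gauss_noise n 1)" "measure (gauss_noise n 1) N = 0"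
    "\<And>z. z \<in> space (gauss_noise n 1) \<Longrightarrow> z \<notin> N \<Longrightarrow> valid_noise (scale_noise s z)"
proof -
  have "AE w in gauss_noise n s. valid_noise w" using standing s unfolding valid_noise_def signal_def by blast
  then obtain N where N: "{w \<in> space (gauss_noise n s). \<not> valid_noise w} \<subseteq> N"
    "emeasure (gauss_noise n s) N = 0" "N \<in> sets (gauss_noise n s)" by (rule AE_E)
  have m: "scale_noise s \<in> gauss_noise n 1 \<rightarrow>\<^sub>M gauss_noise n s"
    unfolding scale_noise_def by (rule measurable_gauss_noise_scale)
  have "measure (gauss_noise n 1) (scale_noise s -` N \<inter> space (gauss_noise n 1)) = measure (gauss_noise n s) N"
    using gauss_noise_scale[OF s, of n] measure_distr[OF m N(3)] unfolding scale_noise_def by simp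
  moreover have "valid_noise (scale_noise s z)" if "z \<in> space (gauss_noise n 1)" "z \<notin> scale_noise s -` N" for z
    using N(1) measurable_space[OF m that(1)] that(2) by blast
  ultimately show ?thesis using that[of "scale_noise s -` N \<inter> space (gauss_noise n 1)"] measurable_sets[OF m N(3)] N(2)
    by (simp add: measure_def)
qed

lemma shrunk_ratio_eq:
  assumes s: "s > 0" and valid: "valid_noise (scale_noise s z)" and small: "s * noise_energy z < noise_level"
    and k: "k0 < k" "k \<le> kmax"
  shows "shrunk_ratio k z = tf_ratio X (signal + Matrix.vec n (scale_noise s z)) k"
proof -
  let ?e = "Matrix.vec n (scale_noise s z)" and ?c = "shrink z / sqrt s"
  have "?c \<cdot>\<^sub>v ?e = shrink z \<cdot>\<^sub>v Matrix.vec n z" unfolding vec_scale_noise using s by (intro eq_vecI) auto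
  moreover have "sqrt (sq_norm ?e) < noise_radius"
    using below_noise_level(1)[of ?e] small sq_norm_scale_noise[of s z] s by simp
  moreover have "sqrt (sq_norm (shrink z \<cdot>\<^sub>v Matrix.vec n z)) < noise_radius"
    using below_noise_level(1)[OF sq_norm_shrunk_below_noise_level] .
  moreover have "\<forall>k\<in>{1..kmax}. full_col_rank (col_sub X (omp_idx ?e k))"
    using valid unfolding valid_noise_def omp_valid_def by blast
  ultimately have "tf_ratio X (signal + ?c \<cdot>\<^sub>v ?e) k = tf_ratio X (signal + ?e) k"
    using tf_ratio_smult_noise[of ?e ?c kmax k] shrink_pos s k by simp
  thus ?thesis unfolding shrunk_ratio_def vec_shrink using \<open>?c \<cdot>\<^sub>v ?e = _\<close> by simp
qed

lemma shrunk_ratio_pos: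
  assumes s: "s > 0" and valid: "valid_noise (scale_noise s z)" and small: "s * noise_energy z < noise_level"
    and k: "k0 < k" "k < kmax"
  shows "shrunk_ratio k z > 0"
proof -
  let ?y = "signal + Matrix.vec n (scale_noise s z)"
  have "omp_res X ?y m \<in> carrier_vec n" for m
    unfolding omp_res_def using omp_resid_carrier[of ?y X] signal_carrier by simp
  moreover have "omp_res X ?y k \<noteq> 0\<^sub>v n" "omp_res X ?y (k - 1) \<noteq> 0\<^sub>v n"
    using valid k unfolding valid_noise_def omp_valid_def by auto
  ultimately have "sq_norm (omp_res X ?y k) > 0" "sq_norm (omp_res X ?y (k - 1)) > 0"
    using sq_norm_pos by blast+
  hence "tf_ratio X ?y k > 0" unfolding tf_ratio_def by simp
  thus ?thesis using shrunk_ratio_eq[OF s valid small] k by simp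
qed

lemma scaled_failure_cases:
  assumes s: "s > 0" and valid: "valid_noise (scale_noise s z)"
    and fails: "tf_omp_fails X (signal + Matrix.vec n (scale_noise s z)) kmax I"
  shows "noise_level / s \<le> noise_energy z \<or> 1 / sqrt s \<le> noise_energy z
    \<or> (\<exists>k\<in>{Suc k0..<kmax}. shrunk_ratio k z \<le> 4 * sqrt s / min_clean_resid)"
proof (rule ccontr)
  assume "\<not> ?thesis"
  hence small1: "noise_energy z < noise_level / s" and small2: "noise_energy z < 1 / sqrt s"
    and late: "\<forall>k\<in>{Suc k0..<kmax}. 4 * sqrt s / min_clean_resid < shrunk_ratio k z" by auto
  let ?e = "Matrix.vec n (scale_noise s z)"
  have small: "s * noise_energy z < noise_level" using small1 s by (simp add: field_simps)
  hence "sq_norm ?e < noise_level" using sq_norm_scale_noise[of s z] s by simp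
  then obtain k where k: "k0 < k" "k \<le> kmax - 1" "tf_ratio X (signal + ?e) k \<le> 4 * sq_norm ?e / min_clean_resid"
    using tf_omp_fails_imp_late_small_ratio[OF _ _ kmax fails] by auto
  have "s * noise_energy z \<le> s * (1 / sqrt s)" using small2 s by (intro mult_left_mono) auto
  hence "sq_norm ?e \<le> s * (1 / sqrt s)" using sq_norm_scale_noise[of s z] s by simp
  also have "\<dots> = sqrt s" using s by (simp add: real_div_sqrt)
  finally have "4 * sq_norm ?e / min_clean_resid \<le> 4 * sqrt s / min_clean_resid"
    using min_clean_resid_pos by (simp add: divide_right_mono)
  moreover have "shrunk_ratio k z = tf_ratio X (signal + ?e) k" using shrunk_ratio_eq[OF s valid small] k kmax by simp
  moreover have "k \<in> {Suc k0..<kmax}" using k kmax by auto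
  ultimately show False using late k(3) by fastforce
qed

lemma energy_tail_tendsto_0: "(energy_tail \<longlongrightarrow> 0) at_top"
proof -
  interpret P: prob_space "gauss_noise n 1" by (rule prob_space_gauss_noise) simp
  let ?D = "distr (gauss_noise n 1) borel noise_energy"
  have RD: "real_distribution ?D" by (rule P.real_distribution_distr[OF borel_measurable_noise_energy])
  have "((\<lambda>R. cdf ?D (R - 1)) \<longlongrightarrow> 1) at_top"
    by (rule filterlim_compose[OF real_distribution.cdf_lim_at_top_prob[OF RD]])
      (use filterlim_tendsto_add_at_top[OF tendsto_const filterlim_ident, of "-1::real"] in simp)
  hence lim: "((\<lambda>R. 1 - cdf ?D (R - 1)) \<longlongrightarrow> 0) at_top" using tendsto_diff[OF tendsto_const, of _ 1 _ 1] by simp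
  have "energy_tail R \<le> 1 - cdf ?D (R - 1)" for R
  proof -
    let ?B = "{z \<in> space (gauss_noise n 1). noise_energy z \<le> R - 1}"
    have B: "?B \<in> sets (gauss_noise n 1)" using borel_measurable_noise_energy by measurable
    have "cdf ?D (R - 1) = measure (gauss_noise n 1) ?B"
      unfolding cdf_def using measure_distr[OF borel_measurable_noise_energy, of "{..R - 1}"]
      by (simp add: vimage_def Int_def conj_commute)
    moreover have "energy_tail R \<le> measure (gauss_noise n 1) (space (gauss_noise n 1) - ?B)"
      unfolding energy_tail_def using B by (intro P.finite_measure_mono) auto
    ultimately show ?thesis using P.prob_compl[OF B] by simp
  qed
  thus ?thesis
    by (intro real_tendsto_sandwich[OF _ _ tendsto_const lim]) (simp_all add: energy_tail_def)
qed

lemma shrunk_ratio_cdf_0: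
  assumes k: "k0 < k" "k < kmax" shows "shrunk_ratio_cdf k 0 = 0"
proof -
  interpret P: prob_space "gauss_noise n 1" by (rule prob_space_gauss_noise) simp
  have le: "shrunk_ratio_cdf k 0 \<le> energy_tail R" if R: "R > 0" for R
  proof -
    define s where "s = noise_level / R"
    have s: "s > 0" unfolding s_def using R noise_level_pos by simp
    obtain N where N: "N \<in> sets (gauss_noise n 1)" "measure (gauss_noise n 1) N = 0"
      "\<And>z. z \<in> space (gauss_noise n 1) \<Longrightarrow> z \<notin> N \<Longrightarrow> valid_noise (scale_noise s z)"
      using valid_scaled_noise_AE[OF s] by blast
    let ?B = "{z \<in> space (gauss_noise n 1). R \<le> noise_energy z}"
    have B: "?B \<in> sets (gauss_noise n 1)" using borel_measurable_noise_energy by measurable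
    have "{z \<in> space (gauss_noise n 1). shrunk_ratio k z \<le> 0} \<subseteq> ?B \<union> N"
    proof (intro subsetI; rule ccontr)
      fix z assume z: "z \<in> {z \<in> space (gauss_noise n 1). shrunk_ratio k z \<le> 0}" and "z \<notin> ?B \<union> N"
      hence "s * noise_energy z < noise_level" "valid_noise (scale_noise s z)"
        using N(3) s R unfolding s_def by (auto simp: field_simps)
      thus False using shrunk_ratio_pos[OF s _ _ k] z by fastforce
    qed
    hence "shrunk_ratio_cdf k 0 \<le> measure (gauss_noise n 1) (?B \<union> N)"
      unfolding shrunk_ratio_cdf_def using B N(1) by (intro P.finite_measure_mono) auto
    also have "\<dots> \<le> energy_tail R"
      using measure_Un_le[OF B N(1)] N(2) unfolding energy_tail_def by simp
    finally show ?thesis .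
  qed
  have "shrunk_ratio_cdf k 0 \<le> 0"
  proof (rule tendsto_le[OF _ energy_tail_tendsto_0 tendsto_const])
    show "\<forall>\<^sub>F R in at_top. shrunk_ratio_cdf k 0 \<le> energy_tail R"
      using eventually_gt_at_top[of "0::real"] by eventually_elim (rule le)
  qed simp
  thus ?thesis unfolding shrunk_ratio_cdf_def using measure_nonneg[of "gauss_noise n 1"] by (simp add: antisym)
qed

lemma shrunk_ratio_cdf_tendsto_0:
  assumes k: "k0 < k" "k < kmax" shows "(shrunk_ratio_cdf k \<longlongrightarrow> 0) (at_right 0)"
proof -
  interpret P: prob_space "gauss_noise n 1" by (rule prob_space_gauss_noise) simp
  let ?D = "distr (gauss_noise n 1) borel (shrunk_ratio k)"
  have RD: "real_distribution ?D" by (rule P.real_distribution_distr[OF borel_measurable_shrunk_ratio])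
  have cdf_eq: "cdf ?D = shrunk_ratio_cdf k"
    unfolding cdf_def shrunk_ratio_cdf_def using measure_distr[OF borel_measurable_shrunk_ratio]
    by (intro ext) (simp add: vimage_def Int_def conj_commute)
  have "continuous (at_right 0) (cdf ?D)"
    by (rule finite_borel_measure.cdf_is_right_cont[OF real_distribution.finite_borel_measure_M[OF RD]])
  thus ?thesis unfolding cdf_eq continuous_within shrunk_ratio_cdf_0[OF k] .
qed

lemma failure_prob_le:
  assumes s: "s > 0"
  shows "measure (gauss_noise n s) {w \<in> space (gauss_noise n s). tf_omp_fails X (X *\<^sub>v \<beta> + Matrix.vec n w) kmax I}
    \<le> energy_tail (noise_level / s) + energy_tail (1 / sqrt s)
      + (\<Sum>k\<in>{Suc k0..<kmax}. shrunk_ratio_cdf k (4 * sqrt s / min_clean_resid))"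
    (is "measure _ ?F \<le> ?bound")
proof (cases "?F \<in> sets (gauss_noise n s)")
  case False
  have "0 \<le> ?bound"
    unfolding energy_tail_def shrunk_ratio_cdf_def by (intro add_nonneg_nonneg sum_nonneg) auto
  thus ?thesis using measure_notin_sets[OF False] by simp
next
  case True
  let ?G = "gauss_noise n 1" and ?K = "{Suc k0..<kmax}"
  interpret P: prob_space ?G by (rule prob_space_gauss_noise) simp
  have m: "scale_noise s \<in> ?G \<rightarrow>\<^sub>M gauss_noise n s"
    unfolding scale_noise_def by (rule measurable_gauss_noise_scale)
  obtain N where N: "N \<in> sets ?G" "measure ?G N = 0"
    "\<And>z. z \<in> space ?G \<Longrightarrow> z \<notin> N \<Longrightarrow> valid_noise (scale_noise s z)"
    using valid_scaled_noise_AE[OF s] by blast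
  let ?B1 = "{z \<in> space ?G. noise_level / s \<le> noise_energy z}"
  let ?B2 = "{z \<in> space ?G. 1 / sqrt s \<le> noise_energy z}"
  let ?C = "\<lambda>k. {z \<in> space ?G. shrunk_ratio k z \<le> 4 * sqrt s / min_clean_resid}"
  have B: "?B1 \<in> sets ?G" "?B2 \<in> sets ?G" using borel_measurable_noise_energy by measurable
  have C: "?C k \<in> sets ?G" for k using borel_measurable_shrunk_ratio[of k] by measurable
  have "measure (gauss_noise n s) ?F = measure ?G (scale_noise s -` ?F \<inter> space ?G)"
    using gauss_noise_scale[OF s, of n] measure_distr[OF m True] unfolding scale_noise_def by simp
  also have "\<dots> \<le> measure ?G (?B1 \<union> ?B2 \<union> (\<Union>k\<in>?K. ?C k) \<union> N)"
  proof (rule P.finite_measure_mono)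
    show "scale_noise s -` ?F \<inter> space ?G \<subseteq> ?B1 \<union> ?B2 \<union> (\<Union>k\<in>?K. ?C k) \<union> N"
    proof
      fix z assume z: "z \<in> scale_noise s -` ?F \<inter> space ?G"
      show "z \<in> ?B1 \<union> ?B2 \<union> (\<Union>k\<in>?K. ?C k) \<union> N"
      proof (cases "z \<in> N")
        case False
        thus ?thesis using scaled_failure_cases[OF s N(3)] z unfolding signal_def by auto
      qed simp
    qed
  qed (use B C N in auto)
  also have "\<dots> \<le> measure ?G ?B1 + measure ?G ?B2 + measure ?G (\<Union>k\<in>?K. ?C k) + measure ?G N"
    using B C N(1) by (intro order.trans[OF measure_Un_le] add_mono measure_Un_le[OF B]) auto
  also have "measure ?G (\<Union>k\<in>?K. ?C k) \<le> (\<Sum>k\<in>?K. measure ?G (?C k))"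
    using C by (intro P.finite_measure_subadditive_finite) auto
  finally show ?thesis using N(2) unfolding energy_tail_def shrunk_ratio_cdf_def by simp
qed

lemma failure_bound_tendsto_0:
  "((\<lambda>s. energy_tail (noise_level / s) + energy_tail (1 / sqrt s)
      + (\<Sum>k\<in>{Suc k0..<kmax}. shrunk_ratio_cdf k (4 * sqrt s / min_clean_resid))) \<longlongrightarrow> 0) (at_right 0)"
proof -
  have pos: "\<forall>\<^sub>F s in at_right (0::real). 0 < s" by (rule eventually_at_right_less)
  have sqrt: "filterlim sqrt (at_right 0) (at_right (0::real))"
  proof (rule tendsto_imp_filterlim_at_right)
    show "(sqrt \<longlongrightarrow> 0) (at_right 0)" using tendsto_real_sqrt[OF tendsto_ident_at, of 0 "{0<..}"] by simp
    show "\<forall>\<^sub>F x in at_right 0. 0 < sqrt x" using pos by eventually_elim simp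
  qed
  have "filterlim (\<lambda>s. noise_level / s) at_top (at_right (0::real))"
    unfolding divide_inverse
    by (rule filterlim_tendsto_pos_mult_at_top[OF tendsto_const noise_level_pos filterlim_inverse_at_top_right])
  hence t1: "((\<lambda>s. energy_tail (noise_level / s)) \<longlongrightarrow> 0) (at_right 0)"
    by (rule filterlim_compose[OF energy_tail_tendsto_0])
  have "filterlim (\<lambda>s. 1 / sqrt s) at_top (at_right (0::real))"
    unfolding divide_inverse by simp (rule filterlim_compose[OF filterlim_inverse_at_top_right sqrt])
  hence t2: "((\<lambda>s. energy_tail (1 / sqrt s)) \<longlongrightarrow> 0) (at_right 0)"
    by (rule filterlim_compose[OF energy_tail_tendsto_0])
  have "filterlim (\<lambda>s. 4 * sqrt s / min_clean_resid) (at_right 0) (at_right (0::real))"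
  proof (rule tendsto_imp_filterlim_at_right)
    have "((\<lambda>s. 4 * sqrt s / min_clean_resid) \<longlongrightarrow> 4 * sqrt 0 / min_clean_resid) (at_right 0)"
      by (intro tendsto_intros) (use min_clean_resid_pos in simp)
    thus "((\<lambda>s. 4 * sqrt s / min_clean_resid) \<longlongrightarrow> 0) (at_right 0)" by simp
    show "\<forall>\<^sub>F x in at_right 0. 0 < 4 * sqrt x / min_clean_resid"
      using pos by eventually_elim (use min_clean_resid_pos in simp)
  qed
  hence t3: "((\<lambda>s. \<Sum>k\<in>{Suc k0..<kmax}. shrunk_ratio_cdf k (4 * sqrt s / min_clean_resid)) \<longlongrightarrow> 0) (at_right 0)"
    by (intro tendsto_null_sum filterlim_compose[OF shrunk_ratio_cdf_tendsto_0]) auto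
  show ?thesis using tendsto_add[OF tendsto_add[OF t1 t2] t3] by simp
qed

lemma tf_omp_failure_tendsto_0:
  "((\<lambda>s. measure (gauss_noise n s)
      {w \<in> space (gauss_noise n s). tf_omp_fails X (X *\<^sub>v \<beta> + Matrix.vec n w) kmax I}) \<longlongrightarrow> 0) (at_right 0)"
proof (rule real_tendsto_sandwich[OF _ _ tendsto_const failure_bound_tendsto_0])
  show "\<forall>\<^sub>F s in at_right 0. measure (gauss_noise n s)
      {w \<in> space (gauss_noise n s). tf_omp_fails X (X *\<^sub>v \<beta> + Matrix.vec n w) kmax I}
    \<le> energy_tail (noise_level / s) + energy_tail (1 / sqrt s)
      + (\<Sum>k\<in>{Suc k0..<kmax}. shrunk_ratio_cdf k (4 * sqrt s / min_clean_resid))"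
    using eventually_at_right_less[of 0] by eventually_elim (rule failure_prob_le)
qed simp

end

theorem theorem2:
  fixes X :: "real mat" and \<beta> :: "real Matrix.vec" and I :: "nat set"
    and n p k0 kmax :: nat
  assumes X_dim: "X \<in> carrier_mat n p"
    and beta_dim: "\<beta> \<in> carrier_vec p"
    and unit_cols: "\<forall>j<p. sq_norm (col X j) = 1"
    and supp: "I = {j. j < p \<and> \<beta> $ j \<noteq> 0}"
    and card_I: "card I = k0" and k0_pos: "k0 \<ge> 1"
    and ERC_rank: "full_col_rank (col_sub X (sorted_list_of_set I))"
    and ERC: "\<forall>j<p. j \<notin> I \<longrightarrow>
                 l1_norm (pinv (col_sub X (sorted_list_of_set I)) *\<^sub>v col X j) < 1"
    and kmax: "kmax > k0"
    and standing: "\<forall>s>0. AE w in gauss_noise n s.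
                     omp_valid X (X *\<^sub>v \<beta> + Matrix.vec n w) kmax"
  shows "((\<lambda>s. measure (gauss_noise n s)
             {w \<in> space (gauss_noise n s).
                tf_omp_fails X (X *\<^sub>v \<beta> + Matrix.vec n w) kmax I})
          \<longlongrightarrow> 0) (at_right 0)"
proof -
  interpret tf_omp_model X \<beta> I n p k0 kmax
    using assms by unfold_locales auto
  show ?thesis by (rule tf_omp_failure_tendsto_0)
qed

end
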